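(* Let $l\in\mathbb N-\frac12$ and let $V$ be a weight $(\mathbb Ch+\tilde{\mathcal H}^{(l)})$-module having a nonzero finite dimensional weight space, on which $z$ acts as a nonzero scalar. Then $V$ contains a $(\mathbb Ch+\tilde{\mathcal H}^{(l)})$-submodule that is simple as an $\tilde{\mathcal H}^{(l)}$-module and all of whose weight spaces are finite dimensional.
   Context: For $l\in\mathbb N-\frac12$, $\tilde{\mathcal H}^{(l)}$ has basis $p_0,\dots,p_{2l},z$ with $z$ central and $[p_k,p_{k'}]=\delta_{k+k',2l}(-1)^{k+l+\frac12}k!(2l-k)!\,z$; the Lie algebra $\mathbb Ch+\tilde{\mathcal H}^{(l)}$ has additionally $[h,p_k]=2(l-k)p_k$, $[h,z]=0$. A weight module is one on which $h$ acts diagonalizably, with weight spaces $V_\lambda=\{v:hv=\lambda v\}$. *)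

theory Defs
  imports Complex_Main
begin

text \<open>A representation of the Lie algebra  C h + H~(l)  with  l = n - 1/2  (n \<ge> 1), so 2l = 2n-1,
  on a complex vector space carried by the type 'v with scalar multiplication sc.
  Basis elements act by: H (for h), P k for k = 0..2l (i.e. k < 2n), Z (for z).\<close>

definition heis_rep ::
  "(complex \<Rightarrow> 'v::ab_group_add \<Rightarrow> 'v) \<Rightarrow> nat \<Rightarrow> ('v \<Rightarrow> 'v) \<Rightarrow> (nat \<Rightarrow> 'v \<Rightarrow> 'v) \<Rightarrow> ('v \<Rightarrow> 'v) \<Rightarrow> bool"
where
  "heis_rep sc n H P Z \<longleftrightarrow>
     vector_space sc \<and>
     Vector_Spaces.linear sc sc H \<and> (\<forall>k<2*n. Vector_Spaces.linear sc sc (P k)) \<and>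
     Vector_Spaces.linear sc sc Z \<and>
     (\<forall>k<2*n. \<forall>v. H (P k v) - P k (H v)
                    = sc (2 * (of_nat n - 1/2 - of_nat k)) (P k v)) \<and>
     (\<forall>v. H (Z v) - Z (H v) = 0) \<and>
     (\<forall>k<2*n. \<forall>v. P k (Z v) - Z (P k v) = 0) \<and>
     (\<forall>k<2*n. \<forall>k'<2*n. \<forall>v. P k (P k' v) - P k' (P k v)
        = (if k + k' = 2*n - 1
           then sc ((-1) ^ (k + n) * of_nat (fact k * fact (2*n - 1 - k))) (Z v)
           else 0))"

definition weight_space :: "(complex \<Rightarrow> 'v \<Rightarrow> 'v) \<Rightarrow> ('v \<Rightarrow> 'v) \<Rightarrow> complex \<Rightarrow> 'v set" where
  "weight_space sc H lam = {v. H v = sc lam v}"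

definition weight_module :: "(complex \<Rightarrow> 'v::ab_group_add \<Rightarrow> 'v) \<Rightarrow> ('v \<Rightarrow> 'v) \<Rightarrow> bool" where
  "weight_module sc H \<longleftrightarrow>
     (\<forall>v. \<exists>\<Lambda> f. finite \<Lambda> \<and> (\<forall>\<mu>\<in>\<Lambda>. f \<mu> \<in> weight_space sc H \<mu>) \<and> v = (\<Sum>\<mu>\<in>\<Lambda>. f \<mu>))"

definition fin_dim :: "(complex \<Rightarrow> 'v::ab_group_add \<Rightarrow> 'v) \<Rightarrow> 'v set \<Rightarrow> bool" where
  "fin_dim sc S \<longleftrightarrow> (\<exists>B. finite B \<and> S \<subseteq> module.span sc B)"

definition heis_submodule ::
  "(complex \<Rightarrow> 'v::ab_group_add \<Rightarrow> 'v) \<Rightarrow> nat \<Rightarrow> (nat \<Rightarrow> 'v \<Rightarrow> 'v) \<Rightarrow> ('v \<Rightarrow> 'v) \<Rightarrow> 'v set \<Rightarrow> bool"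
where
  "heis_submodule sc n P Z W \<longleftrightarrow>
     module.subspace sc W \<and> (\<forall>k<2*n. P k ` W \<subseteq> W) \<and> Z ` W \<subseteq> W"

definition full_submodule ::
  "(complex \<Rightarrow> 'v::ab_group_add \<Rightarrow> 'v) \<Rightarrow> nat \<Rightarrow> ('v \<Rightarrow> 'v) \<Rightarrow> (nat \<Rightarrow> 'v \<Rightarrow> 'v) \<Rightarrow> ('v \<Rightarrow> 'v) \<Rightarrow> 'v set \<Rightarrow> bool"
where
  "full_submodule sc n H P Z W \<longleftrightarrow> heis_submodule sc n P Z W \<and> H ` W \<subseteq> W"

definition heis_simple ::
  "(complex \<Rightarrow> 'v::ab_group_add \<Rightarrow> 'v) \<Rightarrow> nat \<Rightarrow> (nat \<Rightarrow> 'v \<Rightarrow> 'v) \<Rightarrow> ('v \<Rightarrow> 'v) \<Rightarrow> 'v set \<Rightarrow> bool"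
where
  "heis_simple sc n P Z W \<longleftrightarrow>
     heis_submodule sc n P Z W \<and> W \<noteq> {0} \<and>
     (\<forall>U. U \<subseteq> W \<and> heis_submodule sc n P Z U \<longrightarrow> U = {0} \<or> U = W)"

end

theory Submission
  imports Defs "HOL-Computational_Algebra.Fundamental_Theorem_Algebra"
begin

(* Put A_i = p_i and B_i = p_(2l-i) for i < n = l + 1/2. As z acts by a nonzero scalar, these generate
   a representation of the n-th Weyl algebra: [A_i, B_k] = delta_ik g_i with g_i <> 0, all other pairs
   commute, and A_i, B_i shift the h-weight by +w_i, -w_i where w_i = 2l - 2i > 0.
   The operators B_i A_i commute and preserve weight spaces, so the given finite-dimensional weight
   space contains a common eigenvector x. For i <> j the vectors A_i^(m w_j) B_j^(m w_i) x all lie in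
   that weight space and are B_i A_i-eigenvectors with distinct eigenvalues, so one of them vanishes:
   high B_j-powers of x are A_i-nilpotent, and dually. Following this through for A_0, B_0 gives either
   a nonzero weight vector killed by all A_i (or by all B_i), whose B-monomials (A-monomials) span a
   simple module with finite-dimensional weight spaces; or else n = 1 and B_0 A_0 x = tau x with
   tau not in Z g_0, and then the A_0- and B_0-powers of x span a simple module with one-dimensional
   weight spaces. *)

section \<open>Eigenvectors in finite-dimensional subspaces\<close>

lemma funpow_image_subset: "T ` S \<subseteq> S \<Longrightarrow> u \<in> S \<Longrightarrow> (T ^^ k) u \<in> S"
  by (induction k) auto

lemma funpow_commute: "(\<And>z. F (G z) = G (F z)) \<Longrightarrow> F ((G ^^ k) y) = (G ^^ k) (F y)"
  by (induction k) auto

lemma funpow_last_nonzero: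
  assumes "y \<noteq> 0" "(F ^^ k) y = 0"
  shows "\<exists>p. (F ^^ p) y \<noteq> 0 \<and> F ((F ^^ p) y) = 0"
  using assms
proof (induction k)
  case (Suc k)
  then show ?case by (cases "(F ^^ k) y = 0") auto
qed simp

definition poly_op :: "('a::zero \<Rightarrow> 'b::ab_group_add \<Rightarrow> 'b) \<Rightarrow> 'a poly \<Rightarrow> ('b \<Rightarrow> 'b) \<Rightarrow> 'b \<Rightarrow> 'b" where
  "poly_op scale p T = fold_coeffs (\<lambda>a f u. scale a u + T (f u)) p (\<lambda>u. 0)"

context vector_space
begin

lemma span_image_sum_repr:
  assumes "finite I" "u \<in> span (f ` I)"
  shows "\<exists>c. u = (\<Sum>i\<in>I. c i *s f i)"
  using assms
proof (induction I arbitrary: u rule: finite_induct)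
  case (insert a I)
  from insert.prems obtain k where k: "u - k *s f a \<in> span (f ` I)"
    by (auto simp: span_insert)
  from insert.IH[OF k] obtain c where c: "u - k *s f a = (\<Sum>i\<in>I. c i *s f i)" by blast
  have "(\<Sum>i\<in>I. (c(a:=k)) i *s f i) = (\<Sum>i\<in>I. c i *s f i)"
    using insert.hyps by (intro sum.cong) auto
  then show ?case using insert.hyps c
    by (intro exI[of _ "c(a:=k)"]) (auto simp: algebra_simps)
qed simp

lemma span_image_finite_subset:
  assumes "x \<in> span (f ` S)"
  shows "\<exists>C\<subseteq>S. finite C \<and> x \<in> span (f ` C)"
proof -
  from assms obtain t r where t: "x = (\<Sum>a\<in>t. r a *s a)" "finite t" "t \<subseteq> f ` S"
    unfolding span_explicit by blast
  from finite_subset_image[OF t(2,3)] obtain C where C: "C \<subseteq> S" "finite C" "t = f ` C" by blast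
  have "x \<in> span t" unfolding t(1) by (intro span_sum span_scale span_base)
  then show ?thesis using C by blast
qed

lemma module_hom_span_subset:
  assumes T: "module_hom scale scale T" and X: "T ` X \<subseteq> span Y" and x: "x \<in> span X"
  shows "T x \<in> span Y"
proof -
  have "T x \<in> T ` span X" using x by auto
  also have "\<dots> = span (T ` X)" using module_hom.span_image[OF T] by simp
  also have "\<dots> \<subseteq> span Y" using X span_mono span_span by blast
  finally show ?thesis .
qed

lemma eigenvector_in_span_of_eigenvectors:
  assumes fin: "finite I" and u: "u \<in> span (f ` I)"
    and T: "module_hom scale scale T"
    and eig: "\<And>i. i \<in> I \<Longrightarrow> T (f i) = e i *s f i"
    and Tu: "T u = \<mu> *s u"
  shows "u \<in> span (f ` {i\<in>I. e i = \<mu>})"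
  using fin u eig Tu
proof (induction "card {i\<in>I. e i \<noteq> \<mu>}" arbitrary: I u rule: less_induct)
  case less
  interpret T: module_hom scale scale T by fact
  show ?case
  proof (cases "{i\<in>I. e i \<noteq> \<mu>} = {}")
    case True
    then have "{i\<in>I. e i = \<mu>} = I" by auto
    then show ?thesis using less.prems by simp
  next
    case False
    then obtain i0 where i0: "i0 \<in> I" "e i0 \<noteq> \<mu>" by auto
    define J where "J = {i\<in>I. e i \<noteq> e i0}"
    from span_image_sum_repr[OF less.prems(1,2)] obtain c where c: "u = (\<Sum>i\<in>I. c i *s f i)" by blast
    txt \<open>Applying \<open>T - e i0\<close> kills the \<open>i0\<close>-eigencomponents and rescales \<open>u\<close> by \<open>\<mu> - e i0 \<noteq> 0\<close>.\<close>
    have "T u - e i0 *s u = (\<Sum>i\<in>I. (c i * (e i - e i0)) *s f i)"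
      unfolding c using less.prems(3)
      by (simp add: T.sum T.scale scale_sum_right sum_subtractf[symmetric] algebra_simps)
    also have "\<dots> \<in> span (f ` J)"
    proof (intro span_sum)
      fix i assume "i \<in> I"
      then show "(c i * (e i - e i0)) *s f i \<in> span (f ` J)"
        by (cases "e i = e i0") (auto simp: J_def span_zero intro: span_scale span_base)
    qed
    finally have "(\<mu> - e i0) *s u \<in> span (f ` J)" using less.prems(4) by (simp add: scale_left_diff_distrib)
    then have "(1 / (\<mu> - e i0)) *s ((\<mu> - e i0) *s u) \<in> span (f ` J)" by (rule span_scale)
    then have uJ: "u \<in> span (f ` J)" using i0 by simp
    have "{i\<in>J. e i \<noteq> \<mu>} \<subset> {i\<in>I. e i \<noteq> \<mu>}"
      using i0 by (auto simp: J_def)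
    then have "card {i\<in>J. e i \<noteq> \<mu>} < card {i\<in>I. e i \<noteq> \<mu>}"
      using less.prems(1) by (intro psubset_card_mono) auto
    from less.hyps[OF this _ uJ] less.prems(1,3,4)
    have "u \<in> span (f ` {i\<in>J. e i = \<mu>})" by (auto simp: J_def)
    moreover have "f ` {i\<in>J. e i = \<mu>} \<subseteq> f ` {i\<in>I. e i = \<mu>}" by (auto simp: J_def)
    ultimately show ?thesis using span_mono by blast
  qed
qed

lemma invariant_subspace_contains_eigenvector:
  assumes fin: "finite C" and u: "u \<in> span (f ` C)" "u \<noteq> 0" "u \<in> U"
    and U: "subspace U" "T ` U \<subseteq> U" and T: "module_hom scale scale T"
    and eig: "\<And>m. T (f m) = e m *s f m" and inj: "inj e"
  shows "\<exists>m\<in>C. f m \<in> U"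
  using fin u
proof (induction "card C" arbitrary: C u rule: less_induct)
  case less
  interpret T: module_hom scale scale T by fact
  have "C \<noteq> {}" using less.prems by auto
  then obtain m0 where m0: "m0 \<in> C" by auto
  from span_image_sum_repr[OF less.prems(1,2)] obtain c where c: "u = (\<Sum>i\<in>C. c i *s f i)" by blast
  define u' where "u' = T u - e m0 *s u"
  have u'U: "u' \<in> U" unfolding u'_def using less.prems(4) U by (auto simp: subspace_diff subspace_scale)
  have "u' = (\<Sum>i\<in>C. (c i * (e i - e m0)) *s f i)"
    unfolding u'_def c by (simp add: T.sum T.scale eig scale_sum_right sum_subtractf[symmetric] algebra_simps)
  also have "\<dots> \<in> span (f ` (C - {m0}))"
  proof (intro span_sum)
    fix i assume "i \<in> C"
    then show "(c i * (e i - e m0)) *s f i \<in> span (f ` (C - {m0}))"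
      by (cases "i = m0") (auto simp: span_zero intro: span_scale span_base)
  qed
  finally have u'S: "u' \<in> span (f ` (C - {m0}))" .
  show ?case
  proof (cases "u' = 0")
    case False
    have "card (C - {m0}) < card C" using m0 less.prems(1) by (meson card_Diff1_less)
    from less.hyps[OF this _ u'S False u'U] less.prems(1) show ?thesis by auto
  next
    case True
    then have "T u = e m0 *s u" by (simp add: u'_def)
    from eigenvector_in_span_of_eigenvectors[OF less.prems(1,2) T _ this] eig
    have "u \<in> span (f ` {i\<in>C. e i = e m0})" by auto
    moreover have "{i\<in>C. e i = e m0} = {m0}" using inj m0 by (auto simp: inj_on_def)
    ultimately obtain s where s: "u = s *s f m0" by (auto simp: span_singleton)
    with less.prems have "s \<noteq> 0" by auto
    have "(1 / s) *s u \<in> U" using less.prems(4) U(1) by (rule subspace_scale[rotated])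
    then show ?thesis using s \<open>s \<noteq> 0\<close> m0 by auto
  qed
qed

lemma eigenvectors_distinct_eigenvalues_not_in_fin_span:
  fixes f :: "nat \<Rightarrow> 'b"
  assumes B: "finite B" and fB: "\<And>k. f k \<in> span B"
    and T: "module_hom scale scale T"
    and nz: "\<And>k. f k \<noteq> 0" and eig: "\<And>k. T (f k) = e k *s f k" and inj: "inj e"
  shows False
proof -
  define d where "d = card B"
  have injf: "inj_on f {0..d}"
  proof (rule inj_onI)
    fix a b assume "f a = f b"
    then have "(e a - e b) *s f a = 0"
      using eig[of a] eig[of b] by (simp add: scale_left_diff_distrib del: scale_cancel_right)
    then show "a = b" using nz[of a] inj by (simp add: inj_eq)
  qed
  have indep: "independent (f ` {0..d})"
  proof
    assume "dependent (f ` {0..d})"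
    then obtain j where j: "j \<in> {0..d}" "f j \<in> span (f ` {0..d} - {f j})"
      unfolding dependent_def by blast
    have eq: "f ` {0..d} - {f j} = f ` ({0..d} - {j})" using injf j(1)
      by (auto simp: inj_on_def)
    have "f j \<in> span (f ` {i\<in>{0..d} - {j}. e i = e j})"
      by (rule eigenvector_in_span_of_eigenvectors[OF _ _ T]) (use j eq eig in auto)
    moreover have "{i\<in>{0..d} - {j}. e i = e j} = {}" using inj by (auto simp: inj_eq)
    ultimately show False using nz[of j] by (metis image_empty span_empty singletonD)
  qed
  from independent_span_bound[OF B indep] fB
  have "card (f ` {0..d}) \<le> card B" by auto
  moreover have "card (f ` {0..d}) = d + 1" using card_image[OF injf] by simp
  ultimately show False by (simp add: d_def)
qed

lemma poly_op_0 [simp]: "poly_op scale 0 T u = 0"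
  by (simp add: poly_op_def)

lemma poly_op_pCons:
  assumes "module_hom scale scale T"
  shows "poly_op scale (pCons a p) T u = a *s u + T (poly_op scale p T u)"
proof -
  interpret T: module_hom scale scale T by fact
  show ?thesis
  proof (cases "p = 0 \<and> a = 0")
    case True then show ?thesis by (simp add: poly_op_def)
  next
    case False
    then have "fold_coeffs (\<lambda>a f u. a *s u + T (f u)) (pCons a p) =
       (\<lambda>a f u. a *s u + T (f u)) a \<circ> fold_coeffs (\<lambda>a f u. a *s u + T (f u)) p"
      by (cases "p = 0") auto
    then show ?thesis by (simp add: poly_op_def)
  qed
qed

lemma poly_op_add:
  assumes "module_hom scale scale T"
  shows "poly_op scale (p + q) T u = poly_op scale p T u + poly_op scale q T u"
proof -
  interpret T: module_hom scale scale T by fact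
  show ?thesis
  proof (induction p arbitrary: q)
    case (pCons a p)
    show ?case
    proof (cases q rule: pCons_cases)
      case (pCons b q')
      have "poly_op scale (p + q') T u = poly_op scale p T u + poly_op scale q' T u"
        using pCons.IH[of q'] by (simp add: add.commute)
      then show ?thesis
        by (simp add: pCons poly_op_pCons[OF assms] T.add algebra_simps)
    qed
  qed simp
qed

lemma poly_op_smult:
  assumes "module_hom scale scale T"
  shows "poly_op scale (smult c p) T u = c *s poly_op scale p T u"
proof -
  interpret T: module_hom scale scale T by fact
  show ?thesis
    by (induction p) (simp_all add: poly_op_pCons[OF assms] T.scale algebra_simps)
qed

lemma poly_op_mult:
  assumes "module_hom scale scale T"
  shows "poly_op scale (p * q) T u = poly_op scale p T (poly_op scale q T u)"
  by (induction p) (simp_all add: poly_op_pCons[OF assms] poly_op_add[OF assms] poly_op_smult[OF assms])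

lemma poly_op_monom:
  assumes "module_hom scale scale T"
  shows "poly_op scale (monom a k) T u = a *s (T ^^ k) u"
proof -
  interpret T: module_hom scale scale T by fact
  show ?thesis
    by (induction k) (simp_all add: monom_0 monom_Suc poly_op_pCons[OF assms] T.scale)
qed

lemma poly_op_sum:
  assumes "module_hom scale scale T"
  shows "poly_op scale (\<Sum>i\<in>K. p i) T u = (\<Sum>i\<in>K. poly_op scale (p i) T u)"
  by (induction K rule: infinite_finite_induct) (simp_all add: poly_op_add[OF assms])

lemma poly_op_in_subspace:
  assumes "module_hom scale scale T" "subspace S" "T ` S \<subseteq> S" "u \<in> S"
  shows "poly_op scale p T u \<in> S"
  by (induction p) (use assms in \<open>auto simp: poly_op_pCons[OF assms(1)] subspace_add subspace_scale subspace_0\<close>)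

lemma exists_annihilating_poly:
  assumes T: "module_hom scale scale T" and S: "T ` S \<subseteq> S"
    and B: "finite B" "S \<subseteq> span B" and u: "u \<in> S"
  shows "\<exists>p. p \<noteq> 0 \<and> poly_op scale p T u = 0"
proof (rule ccontr)
  assume nex: "\<not> ?thesis"
  define d where "d = card B"
  define g where "g k = (T ^^ k) u" for k
  have inj: "inj_on g {0..d}"
  proof (rule inj_onI, rule ccontr)
    fix a b assume ab: "g a = g b" "a \<noteq> b"
    have "monom (1::'a) a - monom 1 b \<noteq> 0"
      using ab(2) by (metis coeff_monom diff_zero eq_iff_diff_eq_0 zero_neq_one coeff_diff)
    moreover have "poly_op scale (monom 1 a - monom 1 b) T u = 0"
      using ab(1) poly_op_add[OF T, of "monom 1 a" "- monom 1 b"] poly_op_smult[OF T, of "-1" "monom 1 b"]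
      by (simp add: poly_op_monom[OF T] g_def)
    ultimately show False using nex by blast
  qed
  have indep: "independent (g ` {0..d})"
  proof
    assume "dependent (g ` {0..d})"
    then obtain t c where t: "finite t" "t \<subseteq> g ` {0..d}" "(\<Sum>v\<in>t. c v *s v) = 0" "\<exists>v\<in>t. c v \<noteq> 0"
      unfolding dependent_explicit by blast
    define K where "K = {k\<in>{0..d}. g k \<in> t}"
    have tK: "t = g ` K" using t(2) by (auto simp: K_def)
    have injK: "inj_on g K" using inj by (rule inj_on_subset) (auto simp: K_def)
    define p where "p = (\<Sum>k\<in>K. monom (c (g k)) k)"
    have "poly_op scale p T u = (\<Sum>k\<in>K. c (g k) *s g k)"
      by (simp add: p_def poly_op_sum[OF T] poly_op_monom[OF T] g_def)
    also have "\<dots> = (\<Sum>v\<in>t. c v *s v)"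
      unfolding tK by (simp add: sum.reindex[OF injK])
    finally have pz: "poly_op scale p T u = 0" using t(3) by simp
    obtain k0 where k0: "k0 \<in> K" "c (g k0) \<noteq> 0" using t(4) tK by auto
    have "coeff p k0 = (\<Sum>k\<in>K. if k = k0 then c (g k) else 0)"
      by (simp add: p_def coeff_sum coeff_monom)
    also have "\<dots> = c (g k0)"
      using k0 by (simp add: sum.delta' K_def)
    finally have "p \<noteq> 0" using k0 by auto
    then show False using nex pz by blast
  qed
  have "g ` {0..d} \<subseteq> span B"
    using funpow_image_subset[OF S u] B(2) by (auto simp: g_def)
  from independent_span_bound[OF B(1) indep this]
  have "card (g ` {0..d}) \<le> card B" by simp
  moreover have "card (g ` {0..d}) = d + 1" using card_image[OF inj] by simp
  ultimately show False by (simp add: d_def)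
qed

end

lemma eigenvector_from_annihilating_poly:
  fixes scale :: "complex \<Rightarrow> 'b::ab_group_add \<Rightarrow> 'b"
  assumes vs: "vector_space scale" and T: "module_hom scale scale T"
    and S: "module.subspace scale S" "T ` S \<subseteq> S"
    and u: "u \<in> S" "u \<noteq> 0" and p: "p \<noteq> 0" "poly_op scale p T u = 0"
  shows "\<exists>x\<in>S. x \<noteq> 0 \<and> (\<exists>r. T x = scale r x)"
  using p
proof (induction "degree p" arbitrary: p rule: less_induct)
  case less
  interpret vector_space scale by fact
  show ?case
  proof (cases "degree p = 0")
    case True
    then obtain a where "p = [:a:]" by (metis degree_eq_zeroE)
    with less.prems have "a \<noteq> 0" "scale a u = 0"
      by (auto simp: poly_op_pCons[OF T] module_hom.zero[OF T])
    then show ?thesis using u by simp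
  next
    case False
    txt \<open>Split off a linear factor \<open>X - r\<close>; either \<open>q(T) u\<close> is an \<open>r\<close>-eigenvector or \<open>q\<close> annihilates \<open>u\<close>.\<close>
    then have "\<not> constant (poly p)" by (simp add: constant_degree)
    then obtain r where "poly p r = 0" using fundamental_theorem_of_algebra by blast
    then obtain q where q: "p = [:-r, 1:] * q" by (auto simp: poly_eq_0_iff_dvd dvd_def)
    with less.prems have q0: "q \<noteq> 0" by auto
    have "degree p = degree [:-r, 1::complex:] + degree q"
      unfolding q by (rule degree_mult_eq) (use q0 in auto)
    then have dq: "degree q < degree p" by simp
    define y where "y = poly_op scale q T u"
    have "poly_op scale p T u = poly_op scale [:-r, 1:] T y"
      unfolding q y_def by (rule poly_op_mult[OF T])
    also have "\<dots> = scale (- r) y + T y"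
      by (simp add: poly_op_pCons[OF T] module_hom.zero[OF T])
    finally have "poly_op scale p T u = scale (- r) y + T y" .
    with less.prems have Ty: "T y = scale r y" by (simp add: add_eq_0_iff)
    show ?thesis
    proof (cases "y = 0")
      case True
      then show ?thesis using less.hyps[OF dq q0] by (simp add: y_def)
    next
      case False
      moreover have "y \<in> S" unfolding y_def by (rule poly_op_in_subspace[OF T S u(1)])
      ultimately show ?thesis using Ty by blast
    qed
  qed
qed

lemma fin_dim_invariant_subspace_has_eigenvector:
  fixes scale :: "complex \<Rightarrow> 'b::ab_group_add \<Rightarrow> 'b"
  assumes vs: "vector_space scale" and T: "module_hom scale scale T"
    and S: "module.subspace scale S" "T ` S \<subseteq> S"
    and B: "finite B" "S \<subseteq> module.span scale B" and ne: "S \<noteq> {0}"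
  shows "\<exists>x\<in>S. x \<noteq> 0 \<and> (\<exists>r. T x = scale r x)"
proof -
  interpret vector_space scale by fact
  from ne S obtain u where u: "u \<in> S" "u \<noteq> 0" by (auto simp: subspace_0)
  from exists_annihilating_poly[OF T S(2) B u(1)] obtain p where "p \<noteq> 0" "poly_op scale p T u = 0"
    by blast
  from eigenvector_from_annihilating_poly[OF vs T S u this] show ?thesis .
qed

lemma commuting_operators_common_eigenvector:
  fixes scale :: "complex \<Rightarrow> 'b::ab_group_add \<Rightarrow> 'b" and N :: nat and T :: "nat \<Rightarrow> 'b \<Rightarrow> 'b"
  assumes vs: "vector_space scale"
    and T: "\<And>i. i < N \<Longrightarrow> module_hom scale scale (T i)"
    and comm: "\<And>i j x. i < N \<Longrightarrow> j < N \<Longrightarrow> T i (T j x) = T j (T i x)"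
    and S: "module.subspace scale S" "\<And>i. i < N \<Longrightarrow> T i ` S \<subseteq> S"
    and B: "finite B" "S \<subseteq> module.span scale B" and ne: "S \<noteq> {0}"
  shows "\<exists>x\<in>S. x \<noteq> 0 \<and> (\<forall>i<N. \<exists>r. T i x = scale r x)"
proof -
  interpret vector_space scale by fact
  txt \<open>Shrink \<open>S\<close> successively to an eigenspace of \<open>T 0\<close>, \<open>T 1\<close>, \dots, which stay invariant by commutativity.\<close>
  have "\<exists>S'. S' \<subseteq> S \<and> subspace S' \<and> S' \<noteq> {0} \<and> (\<forall>i<N. T i ` S' \<subseteq> S')
          \<and> (\<forall>i<m. \<exists>r. \<forall>x\<in>S'. T i x = scale r x)" if "m \<le> N" for m
    using that
  proof (induction m)
    case 0
    then show ?case using S ne by blast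
  next
    case (Suc m)
    then obtain S' where S': "S' \<subseteq> S" "subspace S'" "S' \<noteq> {0}" "\<forall>i<N. T i ` S' \<subseteq> S'"
      "\<forall>i<m. \<exists>r. \<forall>x\<in>S'. T i x = scale r x" by auto
    have mN: "m < N" using Suc.prems by simp
    interpret Tm: module_hom scale scale "T m" using T[OF mN] .
    obtain x r where x: "x \<in> S'" "x \<noteq> 0" "T m x = scale r x"
      using fin_dim_invariant_subspace_has_eigenvector[OF vs T[OF mN] S'(2) S'(4)[rule_format, OF mN] B(1)]
        S'(1,3) B(2) by blast
    define S'' where "S'' = S' \<inter> {y. T m y = scale r y}"
    have "subspace S''" unfolding S''_def
      using S'(2) by (auto simp: subspace_def Tm.add Tm.scale algebra_simps)
    moreover have "\<forall>i<N. T i ` S'' \<subseteq> S''"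
    proof (intro allI impI subsetI)
      fix i y assume i: "i < N" and "y \<in> T i ` S''"
      then obtain z where z: "z \<in> S''" "y = T i z" by auto
      interpret Ti: module_hom scale scale "T i" using T[OF i] .
      show "y \<in> S''" using z comm[OF mN i, of z] S'(4) i by (auto simp: S''_def Ti.scale)
    qed
    moreover have "S'' \<noteq> {0}" using x by (auto simp: S''_def)
    moreover have "\<forall>i<Suc m. \<exists>r. \<forall>x\<in>S''. T i x = scale r x"
      using S'(5) by (auto simp: S''_def less_Suc_eq)
    ultimately show ?case using S'(1) by (intro exI[of _ S'']) (auto simp: S''_def)
  qed
  from this[of N] obtain S' where S': "S' \<subseteq> S" "subspace S'" "S' \<noteq> {0}"
    "\<forall>i<N. \<exists>r. \<forall>x\<in>S'. T i x = scale r x" by auto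
  from S'(2,3) obtain x where "x \<in> S'" "x \<noteq> 0" by (auto simp: subspace_0)
  then show ?thesis using S' by blast
qed

section \<open>Graded representations of the Weyl algebra\<close>

definition nilpotent_vectors :: "('v::zero \<Rightarrow> 'v) \<Rightarrow> 'v set" where
  "nilpotent_vectors F = {y. \<exists>k. (F ^^ k) y = 0}"

definition simple_weight_submodule :: "(complex \<Rightarrow> 'v::ab_group_add \<Rightarrow> 'v) \<Rightarrow> nat \<Rightarrow> ('v \<Rightarrow> 'v)
   \<Rightarrow> (nat \<Rightarrow> 'v \<Rightarrow> 'v) \<Rightarrow> (nat \<Rightarrow> 'v \<Rightarrow> 'v) \<Rightarrow> 'v set \<Rightarrow> bool" where
  "simple_weight_submodule sc n H A B W \<longleftrightarrow>
     module.subspace sc W \<and> (\<forall>i<n. A i ` W \<subseteq> W \<and> B i ` W \<subseteq> W) \<and> H ` W \<subseteq> W \<and> W \<noteq> {0}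
     \<and> (\<forall>U. U \<subseteq> W \<and> module.subspace sc U \<and> (\<forall>i<n. A i ` U \<subseteq> U \<and> B i ` U \<subseteq> U) \<longrightarrow> U = {0} \<or> U = W)
     \<and> (\<forall>\<nu>. \<exists>F. finite F \<and> W \<inter> {x. H x = sc \<nu> x} \<subseteq> module.span sc F)"

text \<open>A representation of the \<open>n\<close>-th Weyl algebra, graded by \<open>H\<close>.\<close>

locale weyl =
  fixes sc :: "complex \<Rightarrow> 'v::ab_group_add \<Rightarrow> 'v"
    and n :: nat and H :: "'v \<Rightarrow> 'v" and A B :: "nat \<Rightarrow> 'v \<Rightarrow> 'v"
    and g :: "nat \<Rightarrow> complex" and w :: "nat \<Rightarrow> nat"
  assumes vs: "vector_space sc"
    and linH: "module_hom sc sc H"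
    and linA: "i < n \<Longrightarrow> module_hom sc sc (A i)"
    and linB: "i < n \<Longrightarrow> module_hom sc sc (B i)"
    and g_nonzero: "i < n \<Longrightarrow> g i \<noteq> 0"
    and w_pos: "i < n \<Longrightarrow> w i \<ge> 1"
    and HA: "i < n \<Longrightarrow> H (A i x) = A i (H x) + sc (of_nat (w i)) (A i x)"
    and HB: "i < n \<Longrightarrow> H (B i x) = B i (H x) - sc (of_nat (w i)) (B i x)"
    and AB: "i < n \<Longrightarrow> k < n \<Longrightarrow> A i (B k x) = B k (A i x) + (if i = k then sc (g i) x else 0)"
    and AA: "i < n \<Longrightarrow> k < n \<Longrightarrow> A i (A k x) = A k (A i x)"
    and BB: "i < n \<Longrightarrow> k < n \<Longrightarrow> B i (B k x) = B k (B i x)"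
begin

sublocale vector_space sc by (rule vs)

lemma A_add: "i < n \<Longrightarrow> A i (x + y) = A i x + A i y"
  and A_scale: "i < n \<Longrightarrow> A i (sc c x) = sc c (A i x)"
  and A_zero: "i < n \<Longrightarrow> A i 0 = 0"
  and A_diff: "i < n \<Longrightarrow> A i (x - y) = A i x - A i y"
  using linA[of i] by (auto simp: module_hom.add module_hom.scale module_hom.zero module_hom.diff module_hom.sum)

lemma B_add: "i < n \<Longrightarrow> B i (x + y) = B i x + B i y"
  and B_scale: "i < n \<Longrightarrow> B i (sc c x) = sc c (B i x)"
  and B_zero: "i < n \<Longrightarrow> B i 0 = 0"
  and B_diff: "i < n \<Longrightarrow> B i (x - y) = B i x - B i y"
  and B_sum: "i < n \<Longrightarrow> B i (sum f K) = (\<Sum>k\<in>K. B i (f k))"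
  using linB[of i] by (auto simp: module_hom.add module_hom.scale module_hom.zero module_hom.diff module_hom.sum)

lemma H_add: "H (x + y) = H x + H y"
  and H_scale: "H (sc c x) = sc c (H x)"
  and H_zero: "H 0 = 0"
  using linH by (auto simp: module_hom.add module_hom.scale module_hom.zero)

lemma A_pow_zero: "i < n \<Longrightarrow> (A i ^^ k) 0 = 0"
  by (induction k) (auto simp: A_zero)

lemma A_pow_scale: "i < n \<Longrightarrow> (A i ^^ k) (sc c y) = sc c ((A i ^^ k) y)"
  by (induction k) (auto simp: A_scale)

lemma B_pow_scale: "i < n \<Longrightarrow> (B i ^^ k) (sc c y) = sc c ((B i ^^ k) y)"
  by (induction k) (auto simp: B_scale)

lemma BA_hom: "i < n \<Longrightarrow> module_hom sc sc (\<lambda>y. B i (A i y))"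
  by unfold_locales (simp_all add: A_add A_scale B_add B_scale)

text \<open>Exchanging the roles of \<open>A\<close> and \<open>B\<close> (and reversing the grading) is a symmetry of the axioms;
  it turns every statement about \<open>A\<close> into the corresponding one about \<open>B\<close>.\<close>

lemma weyl_swap: "weyl sc n (\<lambda>x. - H x) B A (\<lambda>i. - g i) w"
proof -
  have "module_hom sc sc (\<lambda>x. - H x)"
    using linH by unfold_locales (auto simp: H_add H_scale)
  moreover have "- H (B i x) = B i (- H x) + sc (of_nat (w i)) (B i x)" if "i < n" for i x
    using HB[OF that, of x] that by (simp add: module_hom.neg[OF linB[OF that]])
  moreover have "- H (A i x) = A i (- H x) - sc (of_nat (w i)) (A i x)" if "i < n" for i x
    using HA[OF that, of x] that by (simp add: module_hom.neg[OF linA[OF that]])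
  moreover have "B i (A k x) = A k (B i x) + (if i = k then sc (- g i) x else 0)" if "i < n" "k < n" for i k x
    using AB[OF that(2,1), of x] by auto
  ultimately show ?thesis
    unfolding weyl_def using vs linA linB g_nonzero w_pos AA BB by auto
qed

lemma simple_weight_submodule_swap:
  assumes G: "simple_weight_submodule sc n (\<lambda>x. - H x) B A W"
  shows "simple_weight_submodule sc n H A B W"
proof -
  have sub: "subspace W" using G by (simp add: simple_weight_submodule_def)
  have "H ` W \<subseteq> W"
  proof
    fix y assume "y \<in> H ` W"
    then obtain x where "x \<in> W" "y = H x" by auto
    moreover have "- H x \<in> W" using G \<open>x \<in> W\<close> by (auto simp: simple_weight_submodule_def)
    ultimately show "y \<in> W" using sub subspace_neg by fastforce
  qed
  moreover have "{x. - H x = sc (- \<nu>) x} = {x. H x = sc \<nu> x}" for \<nu>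
    by (auto simp: minus_equation_iff)
  ultimately show ?thesis using G unfolding simple_weight_submodule_def
    by (auto, metis, metis)
qed

lemma H_A_pow:
  assumes i: "i < n" and y: "H y = sc c y"
  shows "H ((A i ^^ p) y) = sc (c + of_nat p * of_nat (w i)) ((A i ^^ p) y)"
proof (induction p)
  case (Suc p)
  have "H ((A i ^^ Suc p) y) = sc (c + of_nat p * of_nat (w i) + of_nat (w i)) ((A i ^^ Suc p) y)"
    by (simp add: HA[OF i] Suc.IH A_add[OF i] A_scale[OF i] scale_left_distrib)
  also have "c + of_nat p * of_nat (w i) + of_nat (w i) = c + of_nat (Suc p) * of_nat (w i)"
    by (simp add: algebra_simps)
  finally show ?case .
qed (simp add: y)

lemma H_B_pow:
  assumes i: "i < n" and y: "H y = sc c y"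
  shows "H ((B i ^^ p) y) = sc (c - of_nat p * of_nat (w i)) ((B i ^^ p) y)"
proof -
  interpret sw: weyl sc n "\<lambda>x. - H x" B A "\<lambda>i. - g i" w by (rule weyl_swap)
  have "- H ((B i ^^ p) y) = sc (- c + of_nat p * of_nat (w i)) ((B i ^^ p) y)"
    using sw.H_A_pow[OF i, of y "- c"] y by simp
  also have "\<dots> = - sc (c - of_nat p * of_nat (w i)) ((B i ^^ p) y)"
    by (simp flip: scale_minus_left)
  finally show ?thesis by simp
qed

lemma BA_A_pow:
  assumes i: "i < n" and x: "B i (A i x) = sc \<tau> x"
  shows "B i (A i ((A i ^^ p) x)) = sc (\<tau> - of_nat p * g i) ((A i ^^ p) x)"
proof (induction p)
  case (Suc p)
  define z where "z = (A i ^^ p) x"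
  have "B i (A i (A i z)) = A i (B i (A i z)) - sc (g i) (A i z)"
    using AB[OF i i, of "A i z"] by (simp add: eq_diff_eq)
  also have "\<dots> = sc (\<tau> - of_nat p * g i - g i) (A i z)"
    using Suc.IH by (simp add: A_diff[OF i] A_scale[OF i] z_def scale_left_diff_distrib)
  also have "\<tau> - of_nat p * g i - g i = \<tau> - of_nat (Suc p) * g i"
    by (simp add: algebra_simps)
  finally show ?case by (simp add: z_def)
qed (simp add: x)

lemma BA_B_pow:
  assumes i: "i < n" and x: "B i (A i x) = sc \<tau> x"
  shows "B i (A i ((B i ^^ p) x)) = sc (\<tau> + of_nat p * g i) ((B i ^^ p) x)"
proof (induction p)
  case (Suc p)
  define z where "z = (B i ^^ p) x"
  have "B i (A i (B i z)) = B i (B i (A i z)) + sc (g i) (B i z)"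
    using AB[OF i i] by (simp add: B_add[OF i] B_scale[OF i])
  also have "\<dots> = sc (\<tau> + of_nat p * g i + g i) (B i z)"
    using Suc.IH by (simp add: B_add[OF i] B_scale[OF i] z_def scale_left_distrib)
  also have "\<tau> + of_nat p * g i + g i = \<tau> + of_nat (Suc p) * g i"
    by (simp add: algebra_simps)
  finally show ?case by (simp add: z_def)
qed (simp add: x)

lemma A_B_pow_Suc:
  assumes i: "i < n" and x: "B i (A i x) = sc \<tau> x"
  shows "A i ((B i ^^ Suc p) x) = sc (\<tau> + of_nat (Suc p) * g i) ((B i ^^ p) x)"
proof -
  have "A i ((B i ^^ Suc p) x) = B i (A i ((B i ^^ p) x)) + sc (g i) ((B i ^^ p) x)"
    using AB[OF i i] by simp
  also have "\<dots> = sc (\<tau> + of_nat p * g i + g i) ((B i ^^ p) x)"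
    by (simp add: BA_B_pow[OF i x] scale_left_distrib)
  also have "\<tau> + of_nat p * g i + g i = \<tau> + of_nat (Suc p) * g i"
    by (simp add: algebra_simps)
  finally show ?thesis .
qed

lemma A_pow_Suc_B:
  assumes i: "i < n"
  shows "(A i ^^ Suc p) (B i y) = B i ((A i ^^ Suc p) y) + sc (of_nat (Suc p) * g i) ((A i ^^ p) y)"
proof (induction p)
  case (Suc p)
  have "(A i ^^ Suc (Suc p)) (B i y)
      = A i (B i ((A i ^^ Suc p) y)) + sc (of_nat (Suc p) * g i) ((A i ^^ Suc p) y)"
    using Suc.IH by (simp add: A_add[OF i] A_scale[OF i])
  also have "\<dots> = B i ((A i ^^ Suc (Suc p)) y) + sc (g i + of_nat (Suc p) * g i) ((A i ^^ Suc p) y)"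
    using AB[OF i i] by (simp add: scale_left_distrib)
  also have "g i + of_nat (Suc p) * g i = of_nat (Suc (Suc p)) * g i"
    by (simp add: algebra_simps)
  finally show ?case .
qed (use AB[OF i i] in simp)

lemma BA_B_pow_other:
  assumes i: "i < n" and j: "j < n" and ij: "i \<noteq> j" and y: "B i (A i y) = sc \<tau> y"
  shows "B i (A i ((B j ^^ p) y)) = sc \<tau> ((B j ^^ p) y)"
proof -
  have "A i ((B j ^^ p) y) = (B j ^^ p) (A i y)"
    by (rule funpow_commute) (use AB[OF i j] ij in simp)
  moreover have "B i ((B j ^^ p) z) = (B j ^^ p) (B i z)" for z
    by (rule funpow_commute) (use BB[OF i j] in simp)
  ultimately show ?thesis using y by (simp add: B_pow_scale[OF j])
qed

lemma BA_commute:
  assumes i: "i < n" and k: "k < n"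
  shows "B i (A i (B k (A k y))) = B k (A k (B i (A i y)))"
proof (cases "i = k")
  case False
  have "B i (A i (B k (A k y))) = B i (B k (A i (A k y)))" using AB[OF i k] False by simp
  also have "\<dots> = B k (B i (A k (A i y)))" using BB[OF i k] AA[OF i k] by simp
  also have "\<dots> = B k (A k (B i (A i y)))" using AB[OF k i] False by simp
  finally show ?thesis .
qed simp

lemma H_BA: "i < n \<Longrightarrow> H (B i (A i y)) = B i (A i (H y))"
  by (simp add: HA HB B_add B_scale)

lemma nilpotent_vectors_scale_iff:
  "i < n \<Longrightarrow> c \<noteq> 0 \<Longrightarrow> sc c y \<in> nilpotent_vectors (A i) \<longleftrightarrow> y \<in> nilpotent_vectors (A i)"
  by (auto simp: nilpotent_vectors_def A_pow_scale)

lemma nilpotent_vectors_A_closed: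
  assumes i: "i < n" and k: "k < n" and y: "y \<in> nilpotent_vectors (A i)"
  shows "A k y \<in> nilpotent_vectors (A i)"
proof -
  obtain m where m: "(A i ^^ m) y = 0" using y by (auto simp: nilpotent_vectors_def)
  have "(A i ^^ m) (A k y) = A k ((A i ^^ m) y)"
    by (rule funpow_commute[symmetric]) (simp add: AA[OF k i])
  then show ?thesis using m A_zero[OF k] by (auto simp: nilpotent_vectors_def)
qed

lemma nilpotent_vectors_B_closed:
  assumes i: "i < n" and k: "k < n" and y: "y \<in> nilpotent_vectors (A i)"
  shows "B k y \<in> nilpotent_vectors (A i)"
proof -
  obtain m where m: "(A i ^^ m) y = 0" using y by (auto simp: nilpotent_vectors_def)
  show ?thesis
  proof (cases "k = i")
    case True
    have "(A i ^^ Suc m) (B i y) = 0"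
      using A_pow_Suc_B[OF i, of m y] m by (simp add: B_zero[OF i] A_zero[OF i] funpow_swap1)
    then show ?thesis using True unfolding nilpotent_vectors_def by blast
  next
    case False
    have "(A i ^^ m) (B k y) = B k ((A i ^^ m) y)"
      by (rule funpow_commute[symmetric]) (use AB[OF i k] False in simp)
    then show ?thesis using m B_zero[OF k] by (auto simp: nilpotent_vectors_def)
  qed
qed

lemma nilpotent_vectors_A_pow_closed:
  "i < n \<Longrightarrow> k < n \<Longrightarrow> y \<in> nilpotent_vectors (A i) \<Longrightarrow> (A k ^^ p) y \<in> nilpotent_vectors (A i)"
  by (induction p) (auto intro: nilpotent_vectors_A_closed)

lemma nilpotent_vectors_B_pow_closed:
  "i < n \<Longrightarrow> k < n \<Longrightarrow> y \<in> nilpotent_vectors (A i) \<Longrightarrow> (B k ^^ p) y \<in> nilpotent_vectors (A i)"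
  by (induction p) (auto intro: nilpotent_vectors_B_closed)

lemma nilpotent_vectors_A_B_disjoint:
  assumes i: "i < n"
    and yA: "y \<in> nilpotent_vectors (A i)" and yB: "y \<in> nilpotent_vectors (B i)"
  shows "y = 0"
proof (rule ccontr)
  interpret sw: weyl sc n "\<lambda>x. - H x" B A "\<lambda>i. - g i" w by (rule weyl_swap)
  assume y0: "y \<noteq> 0"
  from yA obtain k where "(A i ^^ k) y = 0" by (auto simp: nilpotent_vectors_def)
  from funpow_last_nonzero[OF y0 this] obtain p where p: "(A i ^^ p) y \<noteq> 0" "A i ((A i ^^ p) y) = 0"
    by blast
  define y' where "y' = (A i ^^ p) y"
  have "y' \<in> nilpotent_vectors (B i)"
    unfolding y'_def using sw.nilpotent_vectors_B_pow_closed[OF i i yB] .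
  then obtain q where "(B i ^^ q) y' = 0" by (auto simp: nilpotent_vectors_def)
  from funpow_last_nonzero[OF _ this] p obtain r where r: "(B i ^^ r) y' \<noteq> 0" "B i ((B i ^^ r) y') = 0"
    by (auto simp: y'_def)
  txt \<open>\<open>[A i, B i ^^ (r+1)] = (r+1) g i B i ^^ r\<close> evaluated at \<open>y'\<close> gives \<open>0 = (r+1) g i B i ^^ r y'\<close>.\<close>
  have "(B i ^^ Suc r) (A i y') = A i ((B i ^^ Suc r) y') + sc (of_nat (Suc r) * - g i) ((B i ^^ r) y')"
    by (rule sw.A_pow_Suc_B[OF i])
  then have "sc (of_nat (Suc r) * g i) ((B i ^^ r) y') = 0"
    using p r by (simp add: y'_def sw.A_pow_zero[OF i] A_zero[OF i] B_zero[OF i])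
  then show False using r(1) g_nonzero[OF i] by (simp del: of_nat_Suc)
qed

lemma exists_A_singular:
  assumes U: "\<forall>i<n. A i ` U \<subseteq> U" and y: "y \<in> U" "y \<noteq> 0"
    and nil: "\<forall>i<n. y \<in> nilpotent_vectors (A i)"
  shows "\<exists>v\<in>U. v \<noteq> 0 \<and> (\<forall>i<n. A i v = 0)"
proof -
  txt \<open>Kill \<open>A 0\<close>, \<open>A 1\<close>, \dots in turn by the last nonzero power; the \<open>A\<close>'s commute, so earlier zeros persist.\<close>
  have "\<exists>v\<in>U. v \<noteq> 0 \<and> (\<forall>i<n. v \<in> nilpotent_vectors (A i)) \<and> (\<forall>i<m. A i v = 0)" if "m \<le> n" for m
    using that
  proof (induction m)
    case 0
    then show ?case using y nil by blast
  next
    case (Suc m)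
    then obtain v where v: "v \<in> U" "v \<noteq> 0" "\<forall>i<n. v \<in> nilpotent_vectors (A i)" "\<forall>i<m. A i v = 0"
      by auto
    have m: "m < n" using Suc by simp
    from v(3) m obtain k where "(A m ^^ k) v = 0" by (auto simp: nilpotent_vectors_def)
    from funpow_last_nonzero[OF v(2) this] obtain p where p: "(A m ^^ p) v \<noteq> 0" "A m ((A m ^^ p) v) = 0"
      by blast
    define v' where "v' = (A m ^^ p) v"
    have "v' \<in> U" unfolding v'_def using U m v(1) by (intro funpow_image_subset) auto
    moreover have "\<forall>i<n. v' \<in> nilpotent_vectors (A i)"
      using v(3) nilpotent_vectors_A_pow_closed m by (auto simp: v'_def)
    moreover have "A i v' = 0" if "i < Suc m" for i
    proof (cases "i = m")
      case False
      then have i: "i < n" "A i v = 0" using that m v(4) by auto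
      have "A i v' = (A m ^^ p) (A i v)" unfolding v'_def
        by (rule funpow_commute) (simp add: AA[OF i(1) m])
      then show ?thesis by (simp add: i(2) A_pow_zero[OF m])
    qed (use p in \<open>simp add: v'_def\<close>)
    ultimately show ?case using p(1) by (auto simp: v'_def)
  qed
  from this[of n] show ?thesis by auto
qed

end

section \<open>Highest weight modules\<close>

context weyl
begin

definition euler where
  "euler x = (\<Sum>i<n. sc (1 / g i) (B i (A i x)))"

lemma euler_hom: "module_hom sc sc euler"
proof
  fix x y c
  show "euler (x + y) = euler x + euler y"
    by (simp add: euler_def A_add B_add scale_right_distrib sum.distrib)
  show "euler (sc c x) = sc c (euler x)"
    by (simp add: euler_def A_scale B_scale scale_sum_right mult.commute)
qed

lemma euler_B:
  assumes k: "k < n"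
  shows "euler (B k y) = B k (euler y) + B k y"
proof -
  have "euler (B k y) = (\<Sum>i<n. sc (1 / g i) (B i (B k (A i y) + (if i = k then sc (g i) y else 0))))"
    by (simp add: euler_def AB k)
  also have "\<dots> = (\<Sum>i<n. B k (sc (1 / g i) (B i (A i y))) + (if i = k then B k y else 0))"
  proof (intro sum.cong refl)
    fix i assume i: "i \<in> {..<n}"
    then have i': "i < n" by simp
    show "sc (1 / g i) (B i (B k (A i y) + (if i = k then sc (g i) y else 0)))
        = B k (sc (1 / g i) (B i (A i y))) + (if i = k then B k y else 0)"
      using g_nonzero[OF i'] by (auto simp: B_add B_scale B_zero i' k BB scale_right_distrib)
  qed
  also have "\<dots> = B k (euler y) + B k y"
    by (simp add: sum.distrib euler_def B_sum k k[THEN lessThan_iff[THEN iffD2]])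
  finally show ?thesis .
qed

end

locale highest_weight = weyl +
  fixes v and \<mu> :: complex
  assumes v0: "v \<noteq> 0" and Hv: "H v = sc \<mu> v" and Av: "\<And>i. i < n \<Longrightarrow> A i v = 0"
begin

primrec bvec :: "nat list \<Rightarrow> _" where
  "bvec [] = v"
| "bvec (i # is) = B i (bvec is)"

definition words :: "nat \<Rightarrow> nat list set" where
  "words d = {is. set is \<subseteq> {..<n} \<and> length is \<le> d}"

definition W_le :: "nat \<Rightarrow> _" where
  "W_le d = span (bvec ` words d)"

definition W_hw where
  "W_hw = span (bvec ` {is. set is \<subseteq> {..<n}})"

lemma finite_words: "finite (words d)"
  unfolding words_def by (rule finite_lists_length_le) simp

lemma H_bvec: "set is \<subseteq> {..<n} \<Longrightarrow> H (bvec is) = sc (\<mu> - of_nat (sum_list (map w is))) (bvec is)"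
proof (induction "is")
  case (Cons i "is")
  then have i: "i < n" by simp
  have "H (bvec (i # is)) = sc (\<mu> - of_nat (sum_list (map w is)) - of_nat (w i)) (bvec (i # is))"
    using Cons by (simp add: HB[OF i] B_diff[OF i] B_scale[OF i] scale_left_diff_distrib)
  then show ?case by (simp add: algebra_simps)
qed (simp add: Hv)

lemma euler_bvec: "set is \<subseteq> {..<n} \<Longrightarrow> euler (bvec is) = sc (of_nat (length is)) (bvec is)"
proof (induction "is")
  case (Cons i "is")
  then show ?case by (simp add: euler_B B_scale scale_left_distrib algebra_simps)
qed (simp add: euler_def Av B_zero)

lemma bvec_W_le: "set is \<subseteq> {..<n} \<Longrightarrow> bvec is \<in> W_le (length is)"
  unfolding W_le_def words_def by (intro span_base) auto

lemma W_le_mono: "d \<le> d' \<Longrightarrow> W_le d \<subseteq> W_le d'"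
  unfolding W_le_def words_def by (intro span_mono image_mono) auto

lemma B_W_le:
  assumes k: "k < n" and x: "x \<in> W_le d"
  shows "B k x \<in> W_le (Suc d)"
proof -
  have "B k ` bvec ` words d \<subseteq> span (bvec ` words (Suc d))"
  proof
    fix y assume "y \<in> B k ` bvec ` words d"
    then obtain "is" where "is \<in> words d" "y = bvec (k # is)" by auto
    moreover have "k # is \<in> words (Suc d)" using \<open>is \<in> words d\<close> k by (auto simp: words_def)
    ultimately show "y \<in> span (bvec ` words (Suc d))" by (metis bvec.simps(2) imageI span_base)
  qed
  then show ?thesis
    using module_hom_span_subset[OF linB[OF k] _ x[unfolded W_le_def]] by (simp add: W_le_def)
qed

lemma A_bvec: "i < n \<Longrightarrow> set is \<subseteq> {..<n} \<Longrightarrow> A i (bvec is) \<in> W_le (length is - 1)"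
proof (induction "is")
  case Nil
  then show ?case by (simp add: Av span_zero W_le_def)
next
  case (Cons k js)
  then have k: "k < n" and js: "set js \<subseteq> {..<n}" by auto
  have "A i (bvec (k # js)) = B k (A i (bvec js)) + (if i = k then sc (g i) (bvec js) else 0)"
    by (simp add: AB Cons.prems k)
  moreover have "B k (A i (bvec js)) \<in> W_le (length js)"
  proof (cases js)
    case Nil
    then show ?thesis using Cons by (simp add: Av B_zero W_le_def span_zero)
  next
    case (Cons a list)
    then show ?thesis using B_W_le[OF k, of "A i (bvec js)" "length js - 1"] Cons.IH \<open>i < n\<close> js by simp
  qed
  moreover have "(if i = k then sc (g i) (bvec js) else 0) \<in> W_le (length js)"
    using bvec_W_le[OF js] by (auto simp: W_le_def span_zero span_scale)
  ultimately show ?case by (simp add: W_le_def span_add)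
qed

lemma A_W_le_Suc:
  assumes i: "i < n" and x: "x \<in> W_le (Suc d)"
  shows "A i x \<in> W_le d"
proof -
  have "A i ` bvec ` words (Suc d) \<subseteq> span (bvec ` words d)"
  proof
    fix y assume "y \<in> A i ` bvec ` words (Suc d)"
    then obtain "is" where "is": "is \<in> words (Suc d)" "y = A i (bvec is)" by auto
    then have "y \<in> W_le (length is - 1)" using A_bvec[OF i] by (auto simp: words_def)
    moreover have "W_le (length is - 1) \<subseteq> W_le d" using "is" by (intro W_le_mono) (auto simp: words_def)
    ultimately show "y \<in> span (bvec ` words d)" by (auto simp: W_le_def)
  qed
  then show ?thesis
    using module_hom_span_subset[OF linA[OF i] _ x[unfolded W_le_def]] by (simp add: W_le_def)
qed

lemma A_W_le_0:
  assumes i: "i < n" and x: "x \<in> W_le 0"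
  shows "A i x = 0"
proof -
  have "words 0 = {[]}" by (auto simp: words_def)
  then have "A i ` bvec ` words 0 \<subseteq> span {}" using Av[OF i] by simp
  from module_hom_span_subset[OF linA[OF i] this x[unfolded W_le_def]] show ?thesis by simp
qed

lemma A_pow_W_le:
  assumes i: "i < n" and x: "x \<in> W_le d"
  shows "(A i ^^ Suc d) x = 0"
proof -
  have "(A i ^^ k) x \<in> W_le (d - k)" for k
  proof (induction k)
    case (Suc k)
    show ?case
    proof (cases "d - k")
      case 0
      then show ?thesis using A_W_le_0[OF i] Suc by (simp add: W_le_def span_zero)
    next
      case (Suc m)
      then show ?thesis using A_W_le_Suc[OF i] \<open>(A i ^^ k) x \<in> W_le (d - k)\<close>
        by (simp add: diff_Suc split: nat.split)
    qed
  qed (simp add: x)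
  from this[of d] have "(A i ^^ d) x \<in> W_le 0" by simp
  from A_W_le_0[OF i this] show ?thesis by simp
qed

lemma bvec_W_hw: "set is \<subseteq> {..<n} \<Longrightarrow> bvec is \<in> W_hw"
  unfolding W_hw_def by (intro span_base) auto

lemma W_hw_W_le:
  assumes "x \<in> W_hw"
  obtains d where "x \<in> W_le d"
proof -
  from span_image_finite_subset[OF assms[unfolded W_hw_def]] obtain C where
    C: "C \<subseteq> {is. set is \<subseteq> {..<n}}" "finite C" "x \<in> span (bvec ` C)" by blast
  define d where "d = Max (insert 0 (length ` C))"
  have "C \<subseteq> words d" using C(1,2) by (auto simp: words_def d_def)
  then have "span (bvec ` C) \<subseteq> W_le d" unfolding W_le_def by (intro span_mono image_mono)
  then show ?thesis using C(3) that by blast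
qed

lemma A_B_W_hw: "i < n \<Longrightarrow> A i ` W_hw \<subseteq> W_hw \<and> B i ` W_hw \<subseteq> W_hw"
proof -
  assume i: "i < n"
  have "W_le d \<subseteq> W_hw" for d
    unfolding W_le_def W_hw_def words_def by (intro span_mono image_mono) auto
  then have "A i ` bvec ` {is. set is \<subseteq> {..<n}} \<subseteq> W_hw"
    using A_bvec[OF i] by blast
  moreover have "B i ` bvec ` {is. set is \<subseteq> {..<n}} \<subseteq> W_hw"
    using bvec_W_hw[of "i # _"] i by auto
  ultimately show ?thesis
    using module_hom_span_subset[OF linA[OF i]] module_hom_span_subset[OF linB[OF i]]
    by (auto simp: W_hw_def)
qed

lemma H_W_hw: "H ` W_hw \<subseteq> W_hw"
proof -
  have "H ` bvec ` {is. set is \<subseteq> {..<n}} \<subseteq> W_hw"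
  proof
    fix y assume "y \<in> H ` bvec ` {is. set is \<subseteq> {..<n}}"
    then obtain "is" where "set is \<subseteq> {..<n}" "y = H (bvec is)" by auto
    then show "y \<in> W_hw" using H_bvec bvec_W_hw by (auto simp: W_hw_def intro: span_scale)
  qed
  then show ?thesis
    using module_hom_span_subset[OF linH] by (auto simp: W_hw_def)
qed

lemma length_le_sum_weights: "set is \<subseteq> {..<n} \<Longrightarrow> length is \<le> sum_list (map w is)"
  by (induction "is") (auto dest: w_pos)

lemma W_hw_weight_space_fin: "\<exists>F. finite F \<and> W_hw \<inter> {x. H x = sc \<nu> x} \<subseteq> span F"
proof -
  define M where "M = {is. set is \<subseteq> {..<n} \<and> of_nat (sum_list (map w is)) = \<mu> - \<nu>}"
  have finM: "finite M"
  proof (cases "M = {}")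
    case False
    then obtain is0 where is0: "is0 \<in> M" by auto
    have "M \<subseteq> {is. set is \<subseteq> {..<n} \<and> length is \<le> sum_list (map w is0)}"
    proof
      fix "is" assume "is \<in> M"
      then have "sum_list (map w is) = sum_list (map w is0)" "set is \<subseteq> {..<n}"
        using is0 by (auto simp: M_def) (metis of_nat_eq_iff)
      then show "is \<in> {is. set is \<subseteq> {..<n} \<and> length is \<le> sum_list (map w is0)}"
        using length_le_sum_weights[of "is"] by auto
    qed
    moreover have "finite {is. set is \<subseteq> {..<n} \<and> length is \<le> sum_list (map w is0)}"
      by (rule finite_lists_length_le) simp
    ultimately show ?thesis by (rule finite_subset)
  qed simp
  have "W_hw \<inter> {x. H x = sc \<nu> x} \<subseteq> span (bvec ` M)"
  proof
    fix x assume x: "x \<in> W_hw \<inter> {x. H x = sc \<nu> x}"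
    from span_image_finite_subset[of x bvec "{is. set is \<subseteq> {..<n}}"] x obtain C where
      C: "C \<subseteq> {is. set is \<subseteq> {..<n}}" "finite C" "x \<in> span (bvec ` C)" by (auto simp: W_hw_def)
    have "x \<in> span (bvec ` {is\<in>C. \<mu> - of_nat (sum_list (map w is)) = \<nu>})"
      by (rule eigenvector_in_span_of_eigenvectors[OF C(2) C(3) linH]) (use C(1) H_bvec x in auto)
    moreover have "{is\<in>C. \<mu> - of_nat (sum_list (map w is)) = \<nu>} \<subseteq> M"
      using C(1) by (auto simp: M_def)
    ultimately show "x \<in> span (bvec ` M)" by (meson image_mono span_mono subsetD)
  qed
  then show ?thesis using finM by blast
qed

text \<open>The Euler operator vanishes on \<open>A\<close>-singular vectors and multiplies \<open>bvec is\<close> by its length,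
  so an \<open>A\<close>-singular vector of \<open>W_hw\<close> lies in the degree-0 part.\<close>

lemma A_singular_W_hw:
  assumes x: "x \<in> W_hw" and Ax: "\<forall>i<n. A i x = 0"
  shows "x \<in> span {v}"
proof -
  obtain d where d: "x \<in> W_le d" using W_hw_W_le[OF x] .
  have "euler x = sc 0 x" by (simp add: euler_def Ax B_zero)
  then have "x \<in> span (bvec ` {is\<in>words d. of_nat (length is) = (0::complex)})"
    by (intro eigenvector_in_span_of_eigenvectors[OF finite_words d[unfolded W_le_def] euler_hom])
       (auto simp: words_def euler_bvec)
  moreover have "{is\<in>words d. of_nat (length is) = (0::complex)} = {[]}"
    by (auto simp: words_def)
  ultimately show ?thesis by simp
qed

lemma W_hw_simple:
  assumes U: "U \<subseteq> W_hw" "subspace U" "\<forall>i<n. A i ` U \<subseteq> U \<and> B i ` U \<subseteq> U" "U \<noteq> {0}"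
  shows "U = W_hw"
proof -
  from U(2,4) obtain u where u: "u \<in> U" "u \<noteq> 0" by (auto simp: subspace_0)
  have "u \<in> W_hw" using U(1) u(1) by blast
  then obtain d where d: "u \<in> W_le d" by (rule W_hw_W_le)
  have "u \<in> nilpotent_vectors (A i)" if "i < n" for i
    using A_pow_W_le[OF that d] unfolding nilpotent_vectors_def by blast
  moreover have "\<forall>i<n. A i ` U \<subseteq> U" using U(3) by blast
  ultimately obtain u' where u': "u' \<in> U" "u' \<noteq> 0" "\<forall>i<n. A i u' = 0"
    using exists_A_singular[OF _ u] by blast
  have "u' \<in> W_hw" using U(1) u'(1) by blast
  from A_singular_W_hw[OF this u'(3)] obtain c where c: "u' = sc c v"
    by (auto simp: span_singleton)
  with u'(2) have "c \<noteq> 0" by auto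
  with c have "v \<in> U" using subspace_scale[OF U(2) u'(1), of "1 / c"] by simp
  moreover have "\<forall>i<n. B i ` U \<subseteq> U" using U(3) by blast
  ultimately have "bvec is \<in> U" if "set is \<subseteq> {..<n}" for "is"
    using that by (induction "is") auto
  then have "bvec ` {is. set is \<subseteq> {..<n}} \<subseteq> U" by blast
  then have "W_hw \<subseteq> U" unfolding W_hw_def by (rule span_minimal[OF _ U(2)])
  then show ?thesis using U(1) by blast
qed

lemma simple_weight_submodule_W_hw: "simple_weight_submodule sc n H A B W_hw"
proof -
  have "subspace W_hw" by (simp add: W_hw_def)
  moreover have "W_hw \<noteq> {0}" using bvec_W_hw[of "[]"] v0 by auto
  moreover have "\<forall>i<n. A i ` W_hw \<subseteq> W_hw \<and> B i ` W_hw \<subseteq> W_hw" using A_B_W_hw by blast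
  moreover have "\<forall>U. U \<subseteq> W_hw \<and> subspace U \<and> (\<forall>i<n. A i ` U \<subseteq> U \<and> B i ` U \<subseteq> U) \<longrightarrow> U = {0} \<or> U = W_hw"
    using W_hw_simple by blast
  moreover have "\<forall>\<nu>. \<exists>F. finite F \<and> W_hw \<inter> {x. H x = sc \<nu> x} \<subseteq> span F"
    using W_hw_weight_space_fin by blast
  ultimately show ?thesis
    unfolding simple_weight_submodule_def using H_W_hw by (intro conjI) assumption+
qed

end

section \<open>Dense modules\<close>

locale dense_weyl = weyl +
  fixes x and lam \<tau> :: complex
  assumes one: "n = 1" and x0: "x \<noteq> 0" and Hx: "H x = sc lam x" and BAx: "B 0 (A 0 x) = sc \<tau> x"
    and nonint: "\<And>k::int. \<tau> \<noteq> of_int k * g 0"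
begin

lemma n0: "0 < n"
  using one by simp

definition dvec :: "int \<Rightarrow> _" where
  "dvec m = (if 0 \<le> m then (A 0 ^^ nat m) x else (B 0 ^^ nat (- m)) x)"

definition W_dense where
  "W_dense = span (range dvec)"

lemma coeff_A_nonzero: "\<tau> - of_nat k * g 0 \<noteq> 0"
  using nonint[of "int k"] by auto

lemma coeff_B_nonzero: "\<tau> + of_nat k * g 0 \<noteq> 0"
  using nonint[of "- int k"] by (auto simp: add_eq_0_iff)

lemma H_dvec: "H (dvec m) = sc (lam + of_int m * of_nat (w 0)) (dvec m)"
  by (cases "0 \<le> m") (simp_all add: dvec_def H_A_pow[OF n0 Hx] H_B_pow[OF n0 Hx])

lemma BA_dvec: "B 0 (A 0 (dvec m)) = sc (\<tau> - of_int m * g 0) (dvec m)"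
  by (cases "0 \<le> m") (simp_all add: dvec_def BA_A_pow[OF n0 BAx] BA_B_pow[OF n0 BAx])

lemma A_dvec: "A 0 (dvec m) \<in> span {dvec (m + 1)}"
proof (cases "0 \<le> m")
  case True
  then have "A 0 (dvec m) = dvec (m + 1)" by (simp add: dvec_def nat_add_distrib)
  then show ?thesis by (simp add: span_base)
next
  case False
  define k where "k = nat (- m) - 1"
  have k: "nat (- m) = Suc k" using False by (simp add: k_def)
  have "dvec (m + 1) = (B 0 ^^ k) x"
  proof (cases "k = 0")
    case True
    then show ?thesis using False k by (simp add: dvec_def)
  next
    case False
    then have "nat (- (m + 1)) = k" "\<not> 0 \<le> m + 1" using k by auto
    then show ?thesis by (simp add: dvec_def)
  qed
  moreover have "A 0 (dvec m) = sc (\<tau> + of_nat (Suc k) * g 0) ((B 0 ^^ k) x)"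
    using False k A_B_pow_Suc[OF n0 BAx, of k] by (simp add: dvec_def)
  ultimately show ?thesis by (simp add: span_scale span_base)
qed

lemma B_dvec: "B 0 (dvec m) \<in> span {dvec (m - 1)}"
proof (cases "m \<le> 0")
  case True
  then have "nat (- (m - 1)) = Suc (nat (- m))" by simp
  then have "B 0 (dvec m) = dvec (m - 1)" using True by (simp add: dvec_def)
  then show ?thesis by (simp add: span_base)
next
  case False
  define k where "k = nat m - 1"
  have k: "nat m = Suc k" using False by (simp add: k_def)
  have "dvec (m - 1) = (A 0 ^^ k) x"
    using False k by (simp add: dvec_def nat_diff_distrib')
  moreover have "B 0 (dvec m) = sc (\<tau> - of_nat k * g 0) ((A 0 ^^ k) x)"
    using False k BA_A_pow[OF n0 BAx, of k] by (simp add: dvec_def)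
  ultimately show ?thesis by (simp add: span_scale span_base)
qed

lemma A_B_H_W_dense: "A 0 ` W_dense \<subseteq> W_dense" "B 0 ` W_dense \<subseteq> W_dense" "H ` W_dense \<subseteq> W_dense"
proof -
  have "span {dvec m'} \<subseteq> span (range dvec)" for m' by (intro span_mono) auto
  then have "A 0 ` range dvec \<subseteq> span (range dvec)" "B 0 ` range dvec \<subseteq> span (range dvec)"
    using A_dvec B_dvec by blast+
  moreover have "H ` range dvec \<subseteq> span (range dvec)"
  proof
    fix y assume "y \<in> H ` range dvec"
    then obtain m where "y = H (dvec m)" by auto
    then show "y \<in> span (range dvec)" using H_dvec[of m] by (simp add: span_scale span_base)
  qed
  ultimately show "A 0 ` W_dense \<subseteq> W_dense" "B 0 ` W_dense \<subseteq> W_dense" "H ` W_dense \<subseteq> W_dense"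
    unfolding W_dense_def using module_hom_span_subset linA[OF n0] linB[OF n0] linH by blast+
qed

lemma W_dense_weight_space_fin: "\<exists>F. finite F \<and> W_dense \<inter> {y. H y = sc \<nu> y} \<subseteq> span F"
proof -
  define S where "S = {m. lam + of_int m * of_nat (w 0) = \<nu>}"
  have w0: "(of_nat (w 0) :: complex) \<noteq> 0" using w_pos[OF n0] by simp
  have "S \<subseteq> {m0}" if "m0 \<in> S" for m0
  proof
    fix m assume "m \<in> S"
    then have "lam + of_int m * of_nat (w 0) = lam + of_int m0 * of_nat (w 0)"
      using that by (simp add: S_def)
    then have "of_int m * of_nat (w 0) = (of_int m0 * of_nat (w 0) :: complex)"
      by (rule add_left_imp_eq)
    then show "m \<in> {m0}" using w0 by simp
  qed
  then have "finite S" by (metis finite.emptyI finite_insert finite_subset subsetI)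
  moreover have "W_dense \<inter> {y. H y = sc \<nu> y} \<subseteq> span (dvec ` S)"
  proof
    fix y assume y: "y \<in> W_dense \<inter> {y. H y = sc \<nu> y}"
    then obtain C where C: "finite C" "y \<in> span (dvec ` C)"
      using span_image_finite_subset[of y dvec UNIV] by (auto simp: W_dense_def)
    have "y \<in> span (dvec ` {m\<in>C. lam + of_int m * of_nat (w 0) = \<nu>})"
      by (rule eigenvector_in_span_of_eigenvectors[OF C linH]) (use H_dvec y in auto)
    moreover have "{m\<in>C. lam + of_int m * of_nat (w 0) = \<nu>} \<subseteq> S" by (auto simp: S_def)
    ultimately show "y \<in> span (dvec ` S)" using span_mono[OF image_mono] by blast
  qed
  ultimately show ?thesis by blast
qed

lemma x_in_submodule:
  assumes U: "subspace U" "A 0 ` U \<subseteq> U" "B 0 ` U \<subseteq> U" and m: "dvec m \<in> U"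
  shows "x \<in> U"
proof -
  have "x \<in> U" if "(A 0 ^^ k) x \<in> U" for k
    using that
  proof (induction k)
    case (Suc k)
    then have "B 0 ((A 0 ^^ Suc k) x) \<in> U" using U(3) by blast
    then have "sc (\<tau> - of_nat k * g 0) ((A 0 ^^ k) x) \<in> U" using BA_A_pow[OF n0 BAx, of k] by simp
    from subspace_scale[OF U(1) this, of "1 / (\<tau> - of_nat k * g 0)"]
    have "(A 0 ^^ k) x \<in> U" using coeff_A_nonzero[of k] by simp
    then show ?case by (rule Suc.IH)
  qed simp
  moreover have "x \<in> U" if "(B 0 ^^ k) x \<in> U" for k
    using that
  proof (induction k)
    case (Suc k)
    then have "A 0 ((B 0 ^^ Suc k) x) \<in> U" using U(2) by blast
    then have "sc (\<tau> + of_nat (Suc k) * g 0) ((B 0 ^^ k) x) \<in> U" using A_B_pow_Suc[OF n0 BAx, of k] by simp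
    from subspace_scale[OF U(1) this, of "1 / (\<tau> + of_nat (Suc k) * g 0)"]
    have "(B 0 ^^ k) x \<in> U" using coeff_B_nonzero[of "Suc k"] by (simp del: of_nat_Suc)
    then show ?case by (rule Suc.IH)
  qed simp
  ultimately show ?thesis using m by (cases "0 \<le> m") (auto simp: dvec_def)
qed

lemma W_dense_simple:
  assumes U: "U \<subseteq> W_dense" "subspace U" "A 0 ` U \<subseteq> U" "B 0 ` U \<subseteq> U" "U \<noteq> {0}"
  shows "U = W_dense"
proof -
  from U(2,5) obtain u where u: "u \<in> U" "u \<noteq> 0" by (auto simp: subspace_0)
  then obtain C where C: "finite C" "u \<in> span (dvec ` C)"
    using U(1) span_image_finite_subset[of u dvec UNIV] by (auto simp: W_dense_def)
  have "inj (\<lambda>m. \<tau> - of_int m * g 0)" using g_nonzero[OF n0] by (auto simp: inj_def)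
  then obtain m where "dvec m \<in> U"
    using invariant_subspace_contains_eigenvector[OF C u(2,1) U(2) _ BA_hom[OF n0] BA_dvec] U(3,4)
    by blast
  then have "x \<in> U" using x_in_submodule U(2-4) by blast
  then have "(A 0 ^^ k) x \<in> U" "(B 0 ^^ k) x \<in> U" for k
    using funpow_image_subset[OF U(3)] funpow_image_subset[OF U(4)] by blast+
  then have "range dvec \<subseteq> U" by (auto simp: dvec_def)
  then have "W_dense \<subseteq> U" unfolding W_dense_def using span_minimal U(2) by blast
  then show ?thesis using U(1) by blast
qed

lemma simple_weight_submodule_W_dense: "simple_weight_submodule sc n H A B W_dense"
proof -
  have "dvec 0 \<in> W_dense" by (simp add: W_dense_def span_base)
  then have "W_dense \<noteq> {0}" using x0 by (auto simp: dvec_def)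
  moreover have "subspace W_dense" by (simp add: W_dense_def)
  moreover have "\<forall>i<n. A i ` W_dense \<subseteq> W_dense \<and> B i ` W_dense \<subseteq> W_dense"
    using A_B_H_W_dense one by auto
  moreover have "\<forall>U. U \<subseteq> W_dense \<and> subspace U \<and> (\<forall>i<n. A i ` U \<subseteq> U \<and> B i ` U \<subseteq> U)
      \<longrightarrow> U = {0} \<or> U = W_dense"
  proof (intro allI impI)
    fix U assume U: "U \<subseteq> W_dense \<and> subspace U \<and> (\<forall>i<n. A i ` U \<subseteq> U \<and> B i ` U \<subseteq> U)"
    then have "U \<subseteq> W_dense" "subspace U" "A 0 ` U \<subseteq> U" "B 0 ` U \<subseteq> U" using n0 by auto
    then show "U = {0} \<or> U = W_dense" using W_dense_simple by (cases "U = {0}") simp_all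
  qed
  moreover have "\<forall>\<nu>. \<exists>F. finite F \<and> W_dense \<inter> {x. H x = sc \<nu> x} \<subseteq> span F"
    using W_dense_weight_space_fin by blast
  ultimately show ?thesis
    unfolding simple_weight_submodule_def using A_B_H_W_dense(3) by (intro conjI) assumption+
qed

end

section \<open>Simple submodules with finite-dimensional weight spaces\<close>

context weyl
begin

lemma exists_simple_if_A_nilpotent:
  assumes y: "y \<noteq> 0" "H y = sc c y" and nil: "\<forall>i<n. y \<in> nilpotent_vectors (A i)"
  shows "\<exists>W. simple_weight_submodule sc n H A B W"
proof -
  have "\<forall>i<n. A i ` {x. \<exists>\<mu>. H x = sc \<mu> x} \<subseteq> {x. \<exists>\<mu>. H x = sc \<mu> x}"
    using H_A_pow[where p = 1] by fastforce
  with exists_A_singular[of "{x. \<exists>\<mu>. H x = sc \<mu> x}" y] y nil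
  obtain v \<mu> where v: "v \<noteq> 0" "H v = sc \<mu> v" "\<forall>i<n. A i v = 0"
    by blast
  interpret highest_weight sc n H A B g w v \<mu>
    by unfold_locales (use v in auto)
  show ?thesis using simple_weight_submodule_W_hw by blast
qed

lemma exists_simple_if_B_nilpotent:
  assumes y: "y \<noteq> 0" "H y = sc c y" and nil: "\<forall>i<n. y \<in> nilpotent_vectors (B i)"
  shows "\<exists>W. simple_weight_submodule sc n H A B W"
proof -
  interpret sw: weyl sc n "\<lambda>x. - H x" B A "\<lambda>i. - g i" w by (rule weyl_swap)
  have "- H y = sc (- c) y" using y(2) by simp
  from sw.exists_simple_if_A_nilpotent[OF y(1) this nil]
  show ?thesis using simple_weight_submodule_swap by blast
qed

text \<open>The vectors \<open>A i ^^ (m * w j) (B j ^^ (m * w i) x)\<close> all have weight \<open>lam\<close> and are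
  \<open>B i \<circ> A i\<close>-eigenvectors with pairwise distinct eigenvalues, so one of them must vanish.\<close>

lemma B_pow_eventually_A_nilpotent:
  assumes i: "i < n" and j: "j < n" and ij: "i \<noteq> j" and F: "finite F"
    and fin: "{y. H y = sc lam y} \<subseteq> span F" and Hx: "H x = sc lam x" and BAx: "B i (A i x) = sc \<tau> x"
  shows "\<forall>\<^sub>F M in sequentially. (B j ^^ M) x \<in> nilpotent_vectors (A i)"
proof -
  define f where "f m = (A i ^^ (m * w j)) ((B j ^^ (m * w i)) x)" for m
  define e where "e m = \<tau> - of_nat (m * w j) * g i" for m
  have "H (f m) = sc (lam - of_nat (m * w i) * of_nat (w j) + of_nat (m * w j) * of_nat (w i)) (f m)" for m
    unfolding f_def by (rule H_A_pow[OF i H_B_pow[OF j Hx]])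
  then have "f m \<in> span F" for m using fin by (simp add: algebra_simps subset_iff)
  moreover have "B i (A i (f m)) = sc (e m) (f m)" for m
    unfolding f_def e_def by (rule BA_A_pow[OF i BA_B_pow_other[OF i j ij BAx]])
  moreover have "inj e"
  proof (rule injI)
    fix m1 m2 assume "e m1 = e m2"
    then have "(of_nat (m1 * w j) :: complex) = of_nat (m2 * w j)" using g_nonzero[OF i] by (simp add: e_def)
    then show "m1 = m2" using w_pos[OF j] by (simp only: of_nat_eq_iff) simp
  qed
  ultimately obtain m where "f m = 0"
    using eigenvectors_distinct_eigenvalues_not_in_fin_span[OF F _ BA_hom[OF i]] by blast
  then have mem: "(B j ^^ (m * w i)) x \<in> nilpotent_vectors (A i)"
    unfolding nilpotent_vectors_def f_def by blast
  have "(B j ^^ M) x \<in> nilpotent_vectors (A i)" if "m * w i \<le> M" for M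
  proof -
    have "(B j ^^ M) x = (B j ^^ (M - m * w i)) ((B j ^^ (m * w i)) x)"
      using that by (simp add: funpow_add[symmetric, THEN fun_cong, simplified])
    then show ?thesis using nilpotent_vectors_B_pow_closed[OF i j mem] by simp
  qed
  then show ?thesis unfolding eventually_sequentially by blast
qed

lemma A_pow_B_pow_eq_scale:
  assumes i: "i < n" and BAx: "B i (A i x) = sc \<tau> x" and nonint: "\<And>k::int. \<tau> \<noteq> of_int k * g i"
  shows "\<exists>c. c \<noteq> 0 \<and> (A i ^^ p) ((B i ^^ p) x) = sc c x"
proof (induction p)
  case (Suc p)
  then obtain c where c: "c \<noteq> 0" "(A i ^^ p) ((B i ^^ p) x) = sc c x" by blast
  define d where "d = \<tau> + of_nat (Suc p) * g i"
  have "d \<noteq> 0"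
  proof
    assume "d = 0"
    then have "\<tau> = - (of_nat (Suc p) * g i)" unfolding d_def by (simp add: eq_neg_iff_add_eq_0)
    then have "\<tau> = of_int (- int (Suc p)) * g i" by (simp add: algebra_simps)
    then show False using nonint by blast
  qed
  moreover have "(A i ^^ Suc p) ((B i ^^ Suc p) x) = (A i ^^ p) (sc d ((B i ^^ p) x))"
    by (simp only: funpow_Suc_right[where f = "A i"] o_apply A_B_pow_Suc[OF i BAx] d_def)
  then have "(A i ^^ Suc p) ((B i ^^ Suc p) x) = sc (d * c) x"
    by (simp add: A_pow_scale[OF i] c(2))
  ultimately show ?case using c(1) by (intro exI[of _ "d * c"]) simp
qed (intro exI[of _ 1]; simp)

lemma exists_simple_if_A0_nilpotent:
  assumes n0: "0 < n" and x0: "x \<noteq> 0" and Hx: "H x = sc lam x"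
    and nil: "x \<in> nilpotent_vectors (A 0)"
    and ev: "\<forall>\<^sub>F M in sequentially. \<forall>i\<in>{0<..<n}. (B 0 ^^ M) x \<in> nilpotent_vectors (A i)"
  shows "\<exists>W. simple_weight_submodule sc n H A B W"
proof -
  interpret sw: weyl sc n "\<lambda>x. - H x" B A "\<lambda>i. - g i" w by (rule weyl_swap)
  from ev obtain M where M: "\<forall>i\<in>{0<..<n}. (B 0 ^^ M) x \<in> nilpotent_vectors (A i)"
    unfolding eventually_sequentially by blast
  define y where "y = (B 0 ^^ M) x"
  have "y \<in> nilpotent_vectors (A 0)" unfolding y_def by (rule nilpotent_vectors_B_pow_closed[OF n0 n0 nil])
  with M have "\<forall>i<n. y \<in> nilpotent_vectors (A i)" by (auto simp: y_def)
  moreover have "y \<noteq> 0"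
  proof
    assume "y = 0"
    then have "x \<in> nilpotent_vectors (B 0)" unfolding y_def nilpotent_vectors_def by blast
    with nilpotent_vectors_A_B_disjoint[OF n0 nil] x0 show False by blast
  qed
  moreover have "H y = sc (lam - of_nat M * of_nat (w 0)) y" unfolding y_def by (rule H_B_pow[OF n0 Hx])
  ultimately show ?thesis by (rule exists_simple_if_A_nilpotent[rotated 2])
qed

lemma exists_simple_if_BA0_integral:
  assumes n0: "0 < n" and Hx: "H x = sc lam x" and nil: "x \<notin> nilpotent_vectors (A 0)"
    and BAx: "B 0 (A 0 x) = sc (of_nat k * g 0) x"
    and ev: "\<forall>\<^sub>F M in sequentially. \<forall>i\<in>{0<..<n}. (A 0 ^^ M) x \<in> nilpotent_vectors (B i)"
  shows "\<exists>W. simple_weight_submodule sc n H A B W"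
proof -
  interpret sw: weyl sc n "\<lambda>x. - H x" B A "\<lambda>i. - g i" w by (rule weyl_swap)
  define u where "u = (A 0 ^^ Suc k) x"
  have "B 0 u = 0" unfolding u_def using BA_A_pow[OF n0 BAx, of k] by simp
  then have uB: "u \<in> nilpotent_vectors (B 0)" unfolding nilpotent_vectors_def
    by (intro CollectI exI[of _ 1]) simp
  from ev obtain M where M: "\<forall>i\<in>{0<..<n}. (A 0 ^^ (M + Suc k)) x \<in> nilpotent_vectors (B i)"
    unfolding eventually_sequentially by (meson le_add1)
  define z where "z = (A 0 ^^ M) u"
  have z: "z = (A 0 ^^ (M + Suc k)) x" by (simp only: z_def u_def funpow_add o_apply)
  have "z \<in> nilpotent_vectors (B 0)" unfolding z_def by (rule sw.nilpotent_vectors_B_pow_closed[OF n0 n0 uB])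
  with M have "\<forall>i<n. z \<in> nilpotent_vectors (B i)" by (auto simp: z)
  moreover have "z \<noteq> 0"
  proof
    assume "z = 0"
    then have "u \<in> nilpotent_vectors (A 0)" unfolding z_def nilpotent_vectors_def by blast
    with nilpotent_vectors_A_B_disjoint[OF n0 _ uB] have "u = 0" by blast
    then show False using nil unfolding u_def nilpotent_vectors_def by blast
  qed
  moreover have "H z = sc (lam + of_nat (M + Suc k) * of_nat (w 0)) z" unfolding z by (rule H_A_pow[OF n0 Hx])
  ultimately show ?thesis by (rule exists_simple_if_B_nilpotent[rotated 2])
qed

lemma BA_eigenvalue_integral:
  assumes n1: "1 < n" and x0: "x \<noteq> 0" and BAx: "B 0 (A 0 x) = sc \<tau> x"
    and evB: "\<forall>\<^sub>F M in sequentially. (B 0 ^^ M) x \<in> nilpotent_vectors (A 1)"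
    and evA: "\<forall>\<^sub>F M in sequentially. (A 0 ^^ M) x \<in> nilpotent_vectors (B 1)"
  shows "\<exists>k::int. \<tau> = of_int k * g 0"
proof (rule ccontr)
  interpret sw: weyl sc n "\<lambda>x. - H x" B A "\<lambda>i. - g i" w by (rule weyl_swap)
  assume "\<nexists>k::int. \<tau> = of_int k * g 0"
  then have nonint: "\<tau> \<noteq> of_int k * g 0" for k :: int by blast
  have n0: "0 < n" using n1 by simp
  txt \<open>\<open>A 0 ^^ M \<circ> B 0 ^^ M\<close> and \<open>B 0 ^^ M \<circ> A 0 ^^ M\<close> act on \<open>x\<close> by nonzero scalars, so \<open>x\<close> itself is
    both \<open>A 1\<close>- and \<open>B 1\<close>-nilpotent.\<close>
  from eventually_conj[OF evB evA] obtain M where MB: "(B 0 ^^ M) x \<in> nilpotent_vectors (A 1)"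
    and MA: "(A 0 ^^ M) x \<in> nilpotent_vectors (B 1)"
    unfolding eventually_sequentially by blast
  obtain c where c: "c \<noteq> 0" "(A 0 ^^ M) ((B 0 ^^ M) x) = sc c x"
    using A_pow_B_pow_eq_scale[OF n0 BAx nonint] by blast
  have "A 0 (B 0 x) = sc (\<tau> + g 0) x"
    using AB[OF n0 n0, of x] BAx by (simp add: scale_left_distrib)
  moreover have "\<tau> + g 0 \<noteq> of_int k * - g 0" for k :: int
    using nonint[of "- k - 1"] by (auto simp: algebra_simps)
  ultimately obtain c' where c': "c' \<noteq> 0" "(B 0 ^^ M) ((A 0 ^^ M) x) = sc c' x"
    using sw.A_pow_B_pow_eq_scale[OF n0] by blast
  have "(A 0 ^^ M) ((B 0 ^^ M) x) \<in> nilpotent_vectors (A 1)" by (rule nilpotent_vectors_A_pow_closed[OF n1 n0 MB])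
  then have "x \<in> nilpotent_vectors (A 1)" using c nilpotent_vectors_scale_iff[OF n1] by simp
  moreover have "(B 0 ^^ M) ((A 0 ^^ M) x) \<in> nilpotent_vectors (B 1)" by (rule sw.nilpotent_vectors_A_pow_closed[OF n1 n0 MA])
  then have "x \<in> nilpotent_vectors (B 1)" using c' sw.nilpotent_vectors_scale_iff[OF n1] by simp
  ultimately show False using nilpotent_vectors_A_B_disjoint[OF n1] x0 by blast
qed

end

lemma int_multiple_cases:
  fixes t c :: complex
  assumes "t = of_int k * c"
  shows "(\<exists>m::nat. t = of_nat m * c) \<or> (\<exists>m::nat. t + c = of_nat m * - c)"
proof (cases "0 \<le> k")
  case True
  then show ?thesis using assms by (intro disjI1 exI[of _ "nat k"]) simp
next
  case False
  then have "t + c = of_nat (nat (- k - 1)) * - c" using assms by (simp add: algebra_simps)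
  then show ?thesis by blast
qed

context weyl
begin

lemma weight_space_common_BA_eigenvector:
  assumes ne: "{y. H y = sc lam y} \<noteq> {0}" and F: "finite F" "{y. H y = sc lam y} \<subseteq> span F"
  obtains x \<tau> where "x \<noteq> 0" "H x = sc lam x" "\<And>i. i < n \<Longrightarrow> B i (A i x) = sc (\<tau> i) x"
proof -
  define S where "S = {y. H y = sc lam y}"
  have S: "subspace S" unfolding S_def subspace_def
    by (auto simp: H_add H_scale H_zero scale_right_distrib)
  have inv: "(\<lambda>y. B i (A i y)) ` S \<subseteq> S" if "i < n" for i
    using H_BA[OF that] by (auto simp: S_def A_scale[OF that] B_scale[OF that])
  have "\<exists>x\<in>S. x \<noteq> 0 \<and> (\<forall>i<n. \<exists>r. B i (A i x) = sc r x)"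
    by (rule commuting_operators_common_eigenvector[OF vs BA_hom BA_commute S inv F(1)])
      (use ne F(2) in \<open>simp_all add: S_def\<close>)
  then obtain x where x: "x \<in> S" "x \<noteq> 0" "\<forall>i<n. \<exists>r. B i (A i x) = sc r x" by blast
  have "\<forall>i. \<exists>r. i < n \<longrightarrow> B i (A i x) = sc r x" using x(3) by blast
  then obtain \<tau> where \<tau>: "\<forall>i. i < n \<longrightarrow> B i (A i x) = sc (\<tau> i) x" by (rule choice[THEN exE])
  show ?thesis
    by (rule that[of x \<tau>]) (use x(1,2) \<tau> in \<open>simp_all add: S_def\<close>)
qed

lemma B0_pow_eventually_A_nilpotent:
  assumes n0: "0 < n" and F: "finite F" "{y. H y = sc lam y} \<subseteq> span F" and Hx: "H x = sc lam x"
    and BAx: "\<And>i. i < n \<Longrightarrow> B i (A i x) = sc (\<tau> i) x"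
  shows "\<forall>\<^sub>F M in sequentially. \<forall>i\<in>{0<..<n}. (B 0 ^^ M) x \<in> nilpotent_vectors (A i)"
  by (intro eventually_ball_finite ballI B_pow_eventually_A_nilpotent[OF _ n0 _ F Hx BAx]) auto

lemma exists_simple_if_BA0_not_integral:
  assumes n0: "0 < n" and x0: "x \<noteq> 0" and Hx: "H x = sc lam x" and BAx: "B 0 (A 0 x) = sc \<tau> x"
    and nonint: "\<And>k::int. \<tau> \<noteq> of_int k * g 0"
    and evB: "\<forall>\<^sub>F M in sequentially. \<forall>i\<in>{0<..<n}. (B 0 ^^ M) x \<in> nilpotent_vectors (A i)"
    and evA: "\<forall>\<^sub>F M in sequentially. \<forall>i\<in>{0<..<n}. (A 0 ^^ M) x \<in> nilpotent_vectors (B i)"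
  shows "\<exists>W. simple_weight_submodule sc n H A B W"
proof (cases "n = 1")
  case True
  interpret dense_weyl sc n H A B g w x lam \<tau>
    by unfold_locales (use True x0 Hx BAx nonint in auto)
  show ?thesis using simple_weight_submodule_W_dense by blast
next
  case False
  then have n1: "1 < n" using n0 by simp
  have "\<forall>\<^sub>F M in sequentially. (B 0 ^^ M) x \<in> nilpotent_vectors (A 1)"
    using evB by eventually_elim (use n1 in auto)
  moreover have "\<forall>\<^sub>F M in sequentially. (A 0 ^^ M) x \<in> nilpotent_vectors (B 1)"
    using evA by eventually_elim (use n1 in auto)
  ultimately show ?thesis using BA_eigenvalue_integral[OF n1 x0 BAx] nonint by blast
qed

lemma exists_simple_from_BA0_eigenvector:
  assumes n0: "0 < n" and x0: "x \<noteq> 0" and Hx: "H x = sc lam x" and BAx: "B 0 (A 0 x) = sc \<tau> x"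
    and evB: "\<forall>\<^sub>F M in sequentially. \<forall>i\<in>{0<..<n}. (B 0 ^^ M) x \<in> nilpotent_vectors (A i)"
    and evA: "\<forall>\<^sub>F M in sequentially. \<forall>i\<in>{0<..<n}. (A 0 ^^ M) x \<in> nilpotent_vectors (B i)"
  shows "\<exists>W. simple_weight_submodule sc n H A B W"
proof -
  interpret sw: weyl sc n "\<lambda>x. - H x" B A "\<lambda>i. - g i" w by (rule weyl_swap)
  have Hx': "- H x = sc (- lam) x" using Hx by simp
  have ABx: "A 0 (B 0 x) = sc (\<tau> + g 0) x"
    using AB[OF n0 n0, of x] BAx by (simp add: scale_left_distrib)
  consider "x \<in> nilpotent_vectors (A 0)" | "x \<in> nilpotent_vectors (B 0)"
    | k :: nat where "x \<notin> nilpotent_vectors (A 0)" "\<tau> = of_nat k * g 0"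
    | k :: nat where "x \<notin> nilpotent_vectors (B 0)" "\<tau> + g 0 = of_nat k * - g 0"
    | "\<And>k::int. \<tau> \<noteq> of_int k * g 0"
  proof (cases "x \<in> nilpotent_vectors (A 0) \<or> x \<in> nilpotent_vectors (B 0)")
    case False
    show ?thesis
    proof (cases "\<exists>k::int. \<tau> = of_int k * g 0")
      case True
      then obtain k :: int where "\<tau> = of_int k * g 0" by blast
      from int_multiple_cases[OF this] show ?thesis using that(3,4) False by blast
    qed (use that(5) in blast)
  qed (use that(1,2) in blast)
  then show ?thesis
  proof cases
    case 1
    then show ?thesis using exists_simple_if_A0_nilpotent[OF n0 x0 Hx _ evB] by blast
  next
    case 2
    then show ?thesis using sw.exists_simple_if_A0_nilpotent[OF n0 x0 Hx' _ evA]
      simple_weight_submodule_swap by blast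
  next
    case (3 k)
    with BAx have "B 0 (A 0 x) = sc (of_nat k * g 0) x" by simp
    with 3 show ?thesis using exists_simple_if_BA0_integral[OF n0 Hx _ _ evA] by blast
  next
    case (4 k)
    with ABx have "A 0 (B 0 x) = sc (of_nat k * - g 0) x" by simp
    with 4 show ?thesis using sw.exists_simple_if_BA0_integral[OF n0 Hx' _ _ evB]
      simple_weight_submodule_swap by blast
  next
    case 5
    then show ?thesis by (rule exists_simple_if_BA0_not_integral[OF n0 x0 Hx BAx _ evB evA])
  qed
qed

theorem exists_simple_weight_submodule:
  assumes n0: "0 < n" and ne: "{y. H y = sc lam y} \<noteq> {0}"
    and F: "finite F" "{y. H y = sc lam y} \<subseteq> span F"
  shows "\<exists>W. simple_weight_submodule sc n H A B W"
proof -
  interpret sw: weyl sc n "\<lambda>x. - H x" B A "\<lambda>i. - g i" w by (rule weyl_swap)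
  obtain x \<tau> where x0: "x \<noteq> 0" and Hx: "H x = sc lam x" and BAx: "\<And>i. i < n \<Longrightarrow> B i (A i x) = sc (\<tau> i) x"
    using weight_space_common_BA_eigenvector[OF ne F] by blast
  have evB: "\<forall>\<^sub>F M in sequentially. \<forall>i\<in>{0<..<n}. (B 0 ^^ M) x \<in> nilpotent_vectors (A i)"
    by (rule B0_pow_eventually_A_nilpotent[OF n0 F Hx BAx])
  have "{y. - H y = sc (- lam) y} \<subseteq> span F" using F(2) by (auto simp: minus_equation_iff)
  moreover have "- H x = sc (- lam) x" using Hx by simp
  moreover have "A i (B i x) = sc (\<tau> i + g i) x" if "i < n" for i
    using AB[OF that that, of x] BAx[OF that] by (simp add: scale_left_distrib)
  ultimately have evA: "\<forall>\<^sub>F M in sequentially. \<forall>i\<in>{0<..<n}. (A 0 ^^ M) x \<in> nilpotent_vectors (B i)"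
    by (rule sw.B0_pow_eventually_A_nilpotent[OF n0 F(1)])
  show ?thesis by (rule exists_simple_from_BA0_eigenvector[OF n0 x0 Hx BAx[OF n0] evB evA])
qed

end

section \<open>The Heisenberg algebra\<close>

text \<open>The generators \<open>p k\<close> with \<open>k < n\<close> play the role of \<open>A k\<close>, their partners \<open>p (2l - k)\<close> that of \<open>B k\<close>.\<close>

lemma heis_rep_H_P:
  assumes "heis_rep sc n H P Z" "k < 2 * n"
  shows "H (P k v) = P k (H v) + sc (2 * (of_nat n - 1/2 - of_nat k)) (P k v)"
proof -
  have "H (P k v) - P k (H v) = sc (2 * (of_nat n - 1/2 - of_nat k)) (P k v)"
    using assms unfolding heis_rep_def by blast
  then show ?thesis by (simp add: diff_eq_eq add.commute)
qed

lemma heis_rep_P_P: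
  assumes "heis_rep sc n H P Z" "k < 2 * n" "k' < 2 * n"
  shows "P k (P k' v) = P k' (P k v)
    + (if k + k' = 2 * n - 1 then sc ((-1) ^ (k + n) * of_nat (fact k * fact (2 * n - 1 - k))) (Z v) else 0)"
proof -
  have "P k (P k' v) - P k' (P k v)
    = (if k + k' = 2 * n - 1 then sc ((-1) ^ (k + n) * of_nat (fact k * fact (2 * n - 1 - k))) (Z v) else 0)"
    using assms unfolding heis_rep_def by blast
  then show ?thesis by (simp add: diff_eq_eq add.commute)
qed

lemma heis_rep_weyl:
  assumes rep: "heis_rep sc n H P Z" and c: "c \<noteq> 0" "\<And>v. Z v = sc c v"
  shows "weyl sc n H P (\<lambda>i. P (2 * n - 1 - i))
    (\<lambda>i. (-1) ^ (i + n) * of_nat (fact i * fact (2 * n - 1 - i)) * c) (\<lambda>i. 2 * n - 1 - 2 * i)"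
proof -
  have vs: "vector_space sc" using rep by (simp add: heis_rep_def)
  interpret vector_space sc by (rule vs)
  have "H (P i x) = P i (H x) + sc (of_nat (2 * n - 1 - 2 * i)) (P i x)" if i: "i < n" for i x
  proof -
    have "(of_nat (2 * n - 1 - 2 * i) :: complex) = 2 * (of_nat n - 1/2 - of_nat i)"
      using i by (simp add: of_nat_diff algebra_simps)
    then show ?thesis using heis_rep_H_P[OF rep, of i] i by simp
  qed
  moreover have "H (P (2 * n - 1 - i) x) = P (2 * n - 1 - i) (H x) - sc (of_nat (2 * n - 1 - 2 * i)) (P (2 * n - 1 - i) x)"
    if i: "i < n" for i x
  proof -
    have "(2 * (of_nat n - 1/2 - of_nat (2 * n - 1 - i)) :: complex) = - of_nat (2 * n - 1 - 2 * i)"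
      using i by (simp add: of_nat_diff algebra_simps)
    with heis_rep_H_P[OF rep, of "2 * n - 1 - i" x] i
    have "H (P (2 * n - 1 - i) x) = P (2 * n - 1 - i) (H x) + sc (- of_nat (2 * n - 1 - 2 * i)) (P (2 * n - 1 - i) x)"
      by simp
    then show ?thesis by simp
  qed
  moreover have "P i (P (2 * n - 1 - k) x) = P (2 * n - 1 - k) (P i x)
      + (if i = k then sc ((-1) ^ (i + n) * of_nat (fact i * fact (2 * n - 1 - i)) * c) x else 0)"
    if i: "i < n" and k: "k < n" for i k x
  proof -
    have "i + (2 * n - 1 - k) = 2 * n - 1 \<longleftrightarrow> i = k" using i k by auto
    then show ?thesis using heis_rep_P_P[OF rep, of i "2 * n - 1 - k" x] i k by (simp add: c(2) mult.assoc)
  qed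
  moreover have "P i (P k x) = P k (P i x)" if "i < n" "k < n" for i k x
  proof -
    have "i + k \<noteq> 2 * n - 1" using that by simp
    then show ?thesis using heis_rep_P_P[OF rep, of i k x] that by simp
  qed
  moreover have "P (2 * n - 1 - i) (P (2 * n - 1 - k) x) = P (2 * n - 1 - k) (P (2 * n - 1 - i) x)"
    if "i < n" "k < n" for i k x
  proof -
    have "(2 * n - 1 - i) + (2 * n - 1 - k) \<noteq> 2 * n - 1" using that by simp
    then show ?thesis using heis_rep_P_P[OF rep, of "2 * n - 1 - i" "2 * n - 1 - k" x] that by simp
  qed
  moreover have "module_hom sc sc H" using rep by (simp add: heis_rep_def module_hom_iff_linear)
  moreover have "module_hom sc sc (P k)" if "k < 2 * n" for k
    using rep that by (simp add: heis_rep_def module_hom_iff_linear)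
  moreover have "(-1) ^ (i + n) * of_nat (fact i * fact (2 * n - 1 - i)) * c \<noteq> 0" for i
    using c(1) by simp
  ultimately show ?thesis
    unfolding weyl_def using vs by auto
qed

lemma heis_submodule_iff:
  assumes vs: "vector_space sc" and Z: "\<And>v. Z v = sc c v" and U: "module.subspace sc U"
  shows "heis_submodule sc n P Z U \<longleftrightarrow> (\<forall>i<n. P i ` U \<subseteq> U \<and> P (2 * n - 1 - i) ` U \<subseteq> U)"
proof -
  interpret vector_space sc by fact
  have "Z ` U \<subseteq> U" using U by (auto simp: Z subspace_scale)
  moreover have "(\<forall>k<2 * n. P k ` U \<subseteq> U) \<longleftrightarrow> (\<forall>i<n. P i ` U \<subseteq> U \<and> P (2 * n - 1 - i) ` U \<subseteq> U)"
  proof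
    assume PU: "\<forall>i<n. P i ` U \<subseteq> U \<and> P (2 * n - 1 - i) ` U \<subseteq> U"
    show "\<forall>k<2 * n. P k ` U \<subseteq> U"
    proof (intro allI impI)
      fix k assume k: "k < 2 * n"
      show "P k ` U \<subseteq> U"
      proof (cases "k < n")
        case False
        then have "2 * n - 1 - k < n" "2 * n - 1 - (2 * n - 1 - k) = k" using k by auto
        then show ?thesis using PU by metis
      qed (use PU in blast)
    qed
  qed auto
  ultimately show ?thesis using U unfolding heis_submodule_def by blast
qed

lemma heis_simple_of_simple_weight_submodule:
  assumes vs: "vector_space sc" and Z: "\<And>v. Z v = sc c v"
    and W: "simple_weight_submodule sc n H P (\<lambda>i. P (2 * n - 1 - i)) W"
  shows "full_submodule sc n H P Z W \<and> heis_simple sc n P Z W \<and>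
    (\<forall>lam. fin_dim sc (W \<inter> weight_space sc H lam))"
proof -
  note W' = W[unfolded simple_weight_submodule_def]
  from W' have sub: "module.subspace sc W" by (elim conjE)
  from W' have PW: "\<forall>i<n. P i ` W \<subseteq> W \<and> P (2 * n - 1 - i) ` W \<subseteq> W" by (elim conjE)
  from W' have HW: "H ` W \<subseteq> W" by (elim conjE)
  from W' have W0: "W \<noteq> {0}" by (elim conjE)
  from W' have simple: "\<forall>U. U \<subseteq> W \<and> module.subspace sc U \<and> (\<forall>i<n. P i ` U \<subseteq> U \<and> P (2 * n - 1 - i) ` U \<subseteq> U)
      \<longrightarrow> U = {0} \<or> U = W" by (elim conjE)
  from W' have fin: "\<forall>\<nu>. \<exists>F. finite F \<and> W \<inter> {x. H x = sc \<nu> x} \<subseteq> module.span sc F" by (elim conjE)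
  have hs: "heis_submodule sc n P Z W" using heis_submodule_iff[OF vs Z sub] PW by simp
  have "U = {0} \<or> U = W" if U: "U \<subseteq> W" "heis_submodule sc n P Z U" for U
  proof -
    have subU: "module.subspace sc U" using U(2) by (simp add: heis_submodule_def)
    have "\<forall>i<n. P i ` U \<subseteq> U \<and> P (2 * n - 1 - i) ` U \<subseteq> U"
      using heis_submodule_iff[OF vs Z subU] U(2) by simp
    then show ?thesis using simple[rule_format, of U] U(1) subU by blast
  qed
  then have "heis_simple sc n P Z W" using hs W0 unfolding heis_simple_def by blast
  moreover have "full_submodule sc n H P Z W" using hs HW by (simp add: full_submodule_def)
  moreover have "fin_dim sc (W \<inter> weight_space sc H lam)" for lam
    using fin by (simp add: fin_dim_def weight_space_def)
  ultimately show ?thesis by blast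
qed

theorem mainTheorem16:
  fixes sc :: "complex \<Rightarrow> 'v::ab_group_add \<Rightarrow> 'v"
    and n :: nat
    and H Z :: "'v \<Rightarrow> 'v"
    and P :: "nat \<Rightarrow> 'v \<Rightarrow> 'v"
  assumes n: "n \<ge> 1"
    and rep: "heis_rep sc n H P Z"
    and wt: "weight_module sc H"
    and fdws: "\<exists>lam. weight_space sc H lam \<noteq> {0} \<and> fin_dim sc (weight_space sc H lam)"
    and zscalar: "\<exists>c. c \<noteq> 0 \<and> (\<forall>v. Z v = sc c v)"
  shows "\<exists>W. full_submodule sc n H P Z W \<and> heis_simple sc n P Z W \<and>
             (\<forall>lam. fin_dim sc (W \<inter> weight_space sc H lam))"
proof -
  from zscalar obtain c where c: "c \<noteq> 0" "\<And>v. Z v = sc c v" by blast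
  interpret weyl sc n H P "\<lambda>i. P (2 * n - 1 - i)"
    "\<lambda>i. (-1) ^ (i + n) * of_nat (fact i * fact (2 * n - 1 - i)) * c" "\<lambda>i. 2 * n - 1 - 2 * i"
    using heis_rep_weyl[OF rep c] .
  from fdws obtain lam F where lam: "{y. H y = sc lam y} \<noteq> {0}" "finite F" "{y. H y = sc lam y} \<subseteq> span F"
    by (auto simp: weight_space_def fin_dim_def)
  have "0 < n" using n by simp
  from exists_simple_weight_submodule[OF this lam]
  obtain W where "simple_weight_submodule sc n H P (\<lambda>i. P (2 * n - 1 - i)) W" ..
  then show ?thesis using heis_simple_of_simple_weight_submodule[OF vs c(2)] by blast
qed

end
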